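(* Let $\lambda_1,\lambda_2>0$, $H=x^{1/\lambda_1}y^{1/\lambda_2}$ on the bidisc $\{|x|,|y|\le1\}\subset\mathbb{C}^2$, $0<h<1$, $U_s=\{|H|<h\}\cap\{|x|,|y|\le1\}$, and let $v=(v_1,v_I)$ be a pair of smooth real vector fields on $U_s$ with $d(\log H)(v_1)=1$, $d(\log H)(v_I)=i$, such that the negative flow of $v_1$ and the flow of $v_I$ do not increase $|x|,|y|$, and $v_1,v_I$ are tangent to $\{y=\mathrm{const}\}$ near $(0,1)$ and to $\{x=\mathrm{const}\}$ near $(1,0)$. Let $\gamma\subset\{|x|,|y|\le1\}\cap\{H=h_0\}$ be a real curve, where $h_0\in\mathbb{R}$, $0<h_0<h$. Then for any smooth curve $\varrho:[0,1]\to\{0<|z|\le|h_0|\}$ with $\varrho(0)=h_0$ and $\frac{d}{dt}|\varrho(t)|<0$ for all $t$, the transport of $\gamma$ along $\varrho$ remains in $U_s$. Moreover, if $\gamma$ intersects the transversal $\{x=1\}$ then its transport intersects $\{x=1\}$ for all $t$ (and similarly for $\{y=1\}$).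
   Context: Lifting/transport: for a smooth curve $\varrho(t)$ in $\mathbb{C}^*$ and a point $a$ with $H(a)=\varrho(0)$, the lifting of $\varrho$ through $a$ is the trajectory starting at $a$ of the time-dependent real vector field $\mathrm{Re}(\varrho(t)^{-1}\varrho'(t))\,v_1+\mathrm{Im}(\varrho(t)^{-1}\varrho'(t))\,v_I$; it satisfies $H(\tilde\varrho_a(t))=\varrho(t)$. The transport of $\gamma$ along $\varrho$ is the union over $a\in\gamma$ of the liftings of $\varrho$ through $a$. *)

theory Defs
  imports "HOL-Analysis.Analysis"
begin

text \<open>Points of C^2 are pairs (x, y) :: complex \<times> complex; real vector fields on C^2 = R^4
  are maps complex \<times> complex \<Rightarrow> complex \<times> complex.\<close>

definition bidisc :: "(complex \<times> complex) set" where
  "bidisc = {p. cmod (fst p) \<le> 1 \<and> cmod (snd p) \<le> 1}"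

text \<open>|H| = |x|^(1/l1) |y|^(1/l2) (branch independent).\<close>
definition absH :: "real \<Rightarrow> real \<Rightarrow> complex \<times> complex \<Rightarrow> real" where
  "absH l1 l2 p = cmod (fst p) powr (1 / l1) * cmod (snd p) powr (1 / l2)"

definition Us :: "real \<Rightarrow> real \<Rightarrow> real \<Rightarrow> (complex \<times> complex) set" where
  "Us l1 l2 h = {p \<in> bidisc. absH l1 l2 p < h}"

definition dlogH :: "real \<Rightarrow> real \<Rightarrow> complex \<times> complex \<Rightarrow> complex \<times> complex \<Rightarrow> complex" where
  "dlogH l1 l2 p w = fst w / (of_real l1 * fst p) + snd w / (of_real l2 * snd p)"

text \<open>Level set {H = c} of the multivalued H = x^(1/l1) y^(1/l2): some branch takes value c.\<close>
definition H_level :: "real \<Rightarrow> real \<Rightarrow> complex \<Rightarrow> (complex \<times> complex) set" where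
  "H_level l1 l2 c = {p. \<exists>lx ly. exp lx = fst p \<and> exp ly = snd p \<and>
                          exp (lx / of_real l1 + ly / of_real l2) = c}"

inductive_set higher_derivs :: "('a::real_normed_vector \<Rightarrow> 'b::real_normed_vector) \<Rightarrow> ('a \<Rightarrow> 'b) set"
  for f where
  base: "f \<in> higher_derivs f"
| step: "g \<in> higher_derivs f \<Longrightarrow> (\<lambda>x. frechet_derivative g (at x) u) \<in> higher_derivs f"

definition Cinf_on :: "'a::real_normed_vector set \<Rightarrow> ('a \<Rightarrow> 'b::real_normed_vector) \<Rightarrow> bool" where
  "Cinf_on S f \<longleftrightarrow> open S \<and> (\<forall>g\<in>higher_derivs f. g differentiable_on S)"

definition lifting_field ::
  "(real \<Rightarrow> complex) \<Rightarrow> (complex \<times> complex \<Rightarrow> complex \<times> complex) \<Rightarrow>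
   (complex \<times> complex \<Rightarrow> complex \<times> complex) \<Rightarrow> real \<Rightarrow> complex \<times> complex \<Rightarrow> complex \<times> complex" where
  "lifting_field \<rho> v1 vI t p =
     (let q = vector_derivative \<rho> (at t) / \<rho> t in Re q *\<^sub>R v1 p + Im q *\<^sub>R vI p)"

definition is_lifting ::
  "(real \<Rightarrow> complex) \<Rightarrow> (complex \<times> complex \<Rightarrow> complex \<times> complex) \<Rightarrow>
   (complex \<times> complex \<Rightarrow> complex \<times> complex) \<Rightarrow> (complex \<times> complex) set \<Rightarrow>
   complex \<times> complex \<Rightarrow> (real \<Rightarrow> complex \<times> complex) \<Rightarrow> bool" where
  "is_lifting \<rho> v1 vI W a c \<longleftrightarrow> c 0 = a \<and>
     (\<forall>t\<in>{0..1}. c t \<in> W \<and>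
        (c has_vector_derivative lifting_field \<rho> v1 vI t (c t)) (at t within {0..1}))"

end

theory Submission
  imports Defs
begin

text \<open>Along a lifting \<open>c\<close> of \<open>\<rho>\<close> one has \<open>d(log H)(c') = \<rho>'/\<rho>\<close>, so \<open>|H(c t)| = |\<rho> t| \<le> h\<^sub>0 < h\<close>.
  The flow hypotheses give, infinitesimally, that \<open>v\<^sub>1\<close> does not decrease \<open>log |x|\<close>, \<open>log |y|\<close>
  and \<open>v\<^sub>I\<close> preserves them; since \<open>Re (\<rho>'/\<rho>) < 0\<close>, \<open>|x|\<close> and \<open>|y|\<close> do not increase along \<open>c\<close>.
  Where \<open>|x| = 1\<close> (or \<open>|y| = 1\<close>) the fields are tangent to the circle, and a Lipschitz comparison
  keeps that coordinate fixed. A continuity argument then confines every lifting to a compact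
  subset of \<open>U\<^sub>s\<close>, on which uniform Picard steps produce liftings defined on all of \<open>[0,1]\<close>.\<close>

section \<open>Curves and ODEs on real intervals\<close>

lemma ode_local_existence:
  fixes F :: "real \<Rightarrow> 'a::banach \<Rightarrow> 'a"
  assumes "ta < tb" and "0 < r" and "0 \<le> M"
    and cont: "\<And>u. continuous_on {ta..tb} u \<Longrightarrow> u ` {ta..tb} \<subseteq> cball p r \<Longrightarrow>
                 continuous_on {ta..tb} (\<lambda>s. F s (u s))"
    and bound: "\<And>t q. t \<in> {ta..tb} \<Longrightarrow> q \<in> cball p r \<Longrightarrow> norm (F t q) \<le> M"
    and lip: "\<And>t. t \<in> {ta..tb} \<Longrightarrow> L-lipschitz_on (cball p r) (F t)"
    and "(tb - ta) * M \<le> r" and "(tb - ta) * L < 1"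
  obtains c where "c ta = p"
    "\<And>t. t \<in> {ta..tb} \<Longrightarrow> c t \<in> cball p r \<and> (c has_vector_derivative F t (c t)) (at t within {ta..tb})"
proof -
  have "0 \<le> L" using lip[of ta] \<open>ta < tb\<close> by (auto dest: lipschitz_on_nonneg)
  define cl where "cl t = max ta (min t tb)" for t
  have cl_in: "cl t \<in> {ta..tb}" for t using \<open>ta < tb\<close> by (auto simp: cl_def)
  have cl_cont: "continuous_on UNIV cl" unfolding cl_def by (intro continuous_intros)
  define S :: "(real \<Rightarrow>\<^sub>C 'a) set" where "S = PiC UNIV (\<lambda>_. cball p r)"
  have S_iff: "u \<in> S \<longleftrightarrow> (\<forall>t. apply_bcontfun u t \<in> cball p r)" for u
    by (simp add: S_def mem_PiC_iff Pi_iff)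
  have "complete S" unfolding S_def complete_eq_closed by (rule closed_PiC) auto
  have "const_bcontfun p \<in> S" using \<open>0 < r\<close> by (simp add: S_iff const_bcontfun.rep_eq)
  hence "S \<noteq> {}" by auto
  have Fu_cont: "continuous_on {ta..tb} (\<lambda>s. F s (apply_bcontfun u s))" if "u \<in> S" for u
    using that by (intro cont) (auto simp: S_iff)
  define J where "J u t = p + integral {ta..cl t} (\<lambda>s. F s (apply_bcontfun u s))" for u t
  have J_cont: "continuous_on UNIV (J u)" if "u \<in> S" for u
  proof -
    have "continuous_on {ta..tb} (\<lambda>x. integral {ta..x} (\<lambda>s. F s (apply_bcontfun u s)))"
      by (rule indefinite_integral_continuous_1) (rule integrable_continuous_real[OF Fu_cont[OF that]])
    hence "continuous_on UNIV (\<lambda>t. integral {ta..cl t} (\<lambda>s. F s (apply_bcontfun u s)))"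
      by (rule continuous_on_compose2[OF _ cl_cont]) (use cl_in in auto)
    thus ?thesis unfolding J_def by (intro continuous_intros)
  qed
  have J_ball: "J u t \<in> cball p r" if "u \<in> S" for u t
  proof -
    have "norm (integral {ta..cl t} (\<lambda>s. F s (apply_bcontfun u s))) \<le> M * (cl t - ta)"
    proof (rule integral_bound)
      show "continuous_on {ta..cl t} (\<lambda>s. F s (apply_bcontfun u s))"
        by (rule continuous_on_subset[OF Fu_cont[OF that]]) (use cl_in in auto)
    qed (use cl_in[of t] that in \<open>auto intro!: bound simp: S_iff\<close>)
    also have "\<dots> \<le> M * (tb - ta)" using cl_in[of t] \<open>0 \<le> M\<close> by (intro mult_left_mono) auto
    finally show ?thesis using \<open>(tb - ta) * M \<le> r\<close> by (auto simp: J_def dist_norm mult.commute)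
  qed
  have "J u \<in> bcontfun" if "u \<in> S" for u
    unfolding bcontfun_def using J_cont[OF that] J_ball[OF that]
    by (auto intro!: bounded_subset[OF bounded_cball[of p r]])
  define P where "P u = Bcontfun (J u)" for u
  have P_apply: "u \<in> S \<Longrightarrow> apply_bcontfun (P u) = J u" for u
    unfolding P_def using \<open>\<And>u. u \<in> S \<Longrightarrow> J u \<in> bcontfun\<close> by (simp add: Bcontfun_inverse)
  have "P ` S \<subseteq> S" using P_apply J_ball by (auto simp: S_iff)
  have contraction: "dist (P u) (P v) \<le> ((tb - ta) * L) * dist u v" if "u \<in> S" "v \<in> S" for u v
  proof (rule dist_bound)
    fix t
    have "dist (apply_bcontfun (P u) t) (apply_bcontfun (P v) t)
        = norm (integral {ta..cl t} (\<lambda>s. F s (apply_bcontfun u s) - F s (apply_bcontfun v s)))"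
      using that cl_in[of t]
      by (simp add: P_apply J_def dist_norm integral_diff integrable_continuous_real
          continuous_on_subset[OF Fu_cont])
    also have "\<dots> \<le> (L * dist u v) * (cl t - ta)"
    proof (rule integral_bound)
      show "continuous_on {ta..cl t} (\<lambda>s. F s (apply_bcontfun u s) - F s (apply_bcontfun v s))"
        using that cl_in[of t] by (intro continuous_intros continuous_on_subset[OF Fu_cont]) auto
      fix s assume s: "s \<in> {ta..cl t}"
      have "norm (F s (apply_bcontfun u s) - F s (apply_bcontfun v s))
           \<le> L * norm (apply_bcontfun u s - apply_bcontfun v s)"
        using that s cl_in[of t] by (intro lipschitz_on_normD[OF lip]) (auto simp: S_iff)
      also have "\<dots> \<le> L * dist u v"
        using dist_bounded[of u s v] \<open>0 \<le> L\<close> by (intro mult_left_mono) (auto simp: dist_norm)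
      finally show "norm (F s (apply_bcontfun u s) - F s (apply_bcontfun v s)) \<le> L * dist u v" .
    qed (use cl_in in auto)
    also have "\<dots> \<le> (L * dist u v) * (tb - ta)"
      using cl_in[of t] \<open>0 \<le> L\<close> by (intro mult_left_mono) auto
    finally show "dist (apply_bcontfun (P u) t) (apply_bcontfun (P v) t) \<le> ((tb - ta) * L) * dist u v"
      by (simp add: algebra_simps)
  qed
  obtain u where "u \<in> S" and "P u = u"
    using Banach_fix[OF \<open>complete S\<close> \<open>S \<noteq> {}\<close> _ \<open>(tb - ta) * L < 1\<close> \<open>P ` S \<subseteq> S\<close> contraction]
      \<open>ta < tb\<close> \<open>0 \<le> L\<close> by auto
  define c where "c = apply_bcontfun u"
  have c_J: "c t = J u t" for t unfolding c_def using P_apply[OF \<open>u \<in> S\<close>] \<open>P u = u\<close> by metis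
  show ?thesis
  proof
    show "c ta = p" using \<open>ta < tb\<close> by (simp add: c_J J_def cl_def)
  next
    fix t assume t: "t \<in> {ta..tb}"
    have "c t \<in> cball p r" using \<open>u \<in> S\<close> by (simp add: c_def S_iff)
    moreover have "((\<lambda>t. p + integral {ta..t} (\<lambda>s. F s (c s))) has_vector_derivative
            (0 + F t (c t))) (at t within {ta..tb})"
      unfolding c_def by (intro derivative_intros integral_has_vector_derivative Fu_cont \<open>u \<in> S\<close> t)
    hence "((\<lambda>t. p + integral {ta..t} (\<lambda>s. F s (c s))) has_vector_derivative F t (c t))
        (at t within {ta..tb})" by simp
    hence "(c has_vector_derivative F t (c t)) (at t within {ta..tb})"
    proof (rule has_vector_derivative_transform[OF t, rotated])
      fix x assume "x \<in> {ta..tb}"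
      hence "cl x = x" by (auto simp: cl_def)
      thus "c x = p + integral {ta..x} (\<lambda>s. F s (c s))" using c_J[of x] by (simp add: J_def c_def)
    qed
    ultimately show "c t \<in> cball p r \<and> (c has_vector_derivative F t (c t)) (at t within {ta..tb})" ..
  qed
qed

lemma Cinf_on_differentiable_on: "Cinf_on W f \<Longrightarrow> f differentiable_on W"
  unfolding Cinf_on_def using higher_derivs.base by blast

lemma Cinf_on_continuous_on: "Cinf_on W f \<Longrightarrow> continuous_on W f"
  by (rule differentiable_imp_continuous_on[OF Cinf_on_differentiable_on])

lemma Cinf_on_has_derivative:
  assumes "Cinf_on W f" "x \<in> W"
  shows "(f has_derivative frechet_derivative f (at x)) (at x)"
proof -
  have "open W" using assms(1) by (simp add: Cinf_on_def)
  hence "f differentiable at x" using Cinf_on_differentiable_on[OF assms(1)] assms(2)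
    by (simp add: differentiable_on_eq_differentiable_at)
  thus ?thesis by (simp add: frechet_derivative_works)
qed

lemma Cinf_on_continuous_on_derivative:
  "Cinf_on W f \<Longrightarrow> continuous_on W (\<lambda>x. frechet_derivative f (at x) u)"
  unfolding Cinf_on_def
  by (metis differentiable_imp_continuous_on higher_derivs.base higher_derivs.step)

lemma onorm_le_sum_Basis:
  fixes D :: "'a::euclidean_space \<Rightarrow> 'b::real_normed_vector"
  assumes "bounded_linear D"
  shows "onorm D \<le> (\<Sum>b\<in>Basis. norm (D b))"
proof (rule onorm_le)
  fix x :: 'a
  interpret D: bounded_linear D by fact
  have "D x = D (\<Sum>b\<in>Basis. (x \<bullet> b) *\<^sub>R b)" by (simp add: euclidean_representation)
  also have "\<dots> = (\<Sum>b\<in>Basis. (x \<bullet> b) *\<^sub>R D b)" by (simp add: D.sum D.scale)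
  finally have "norm (D x) \<le> (\<Sum>b\<in>Basis. norm ((x \<bullet> b) *\<^sub>R D b))"
    by (metis norm_sum)
  also have "\<dots> \<le> (\<Sum>b\<in>Basis. norm x * norm (D b))"
    by (intro sum_mono) (auto intro: mult_right_mono Basis_le_norm)
  finally show "norm (D x) \<le> (\<Sum>b\<in>Basis. norm (D b)) * norm x"
    by (simp add: sum_distrib_left mult.commute)
qed

lemma Cinf_on_lipschitz_on_convex:
  fixes f :: "'a::euclidean_space \<Rightarrow> 'b::real_normed_vector"
  assumes f: "Cinf_on W f" and "compact C" "C \<subseteq> W"
  obtains B where "\<And>S. convex S \<Longrightarrow> S \<subseteq> C \<Longrightarrow> B-lipschitz_on S f"
proof -
  have "continuous_on C (\<lambda>x. \<Sum>b\<in>Basis. norm (frechet_derivative f (at x) b))"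
    by (intro continuous_intros continuous_on_subset[OF Cinf_on_continuous_on_derivative[OF f]] assms)
  then obtain B where "B \<ge> 0" and B: "\<And>x. x \<in> C \<Longrightarrow> norm (\<Sum>b\<in>Basis. norm (frechet_derivative f (at x) b)) \<le> B"
    using continuous_on_compact_bound[OF \<open>compact C\<close>] by blast
  have "B-lipschitz_on S f" if S: "convex S" "S \<subseteq> C" for S
  proof (rule lipschitz_onI[OF _ \<open>B \<ge> 0\<close>])
    fix p q assume "p \<in> S" "q \<in> S"
    have "norm (f p - f q) \<le> B * norm (p - q)"
    proof (rule differentiable_bound[OF S(1) _ _ \<open>p \<in> S\<close> \<open>q \<in> S\<close>])
      fix x assume "x \<in> S"
      hence "x \<in> W" using S assms by auto
      note D = Cinf_on_has_derivative[OF f this]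
      show "(f has_derivative frechet_derivative f (at x)) (at x within S)"
        by (rule has_derivative_at_withinI[OF D])
      have "onorm (frechet_derivative f (at x)) \<le> (\<Sum>b\<in>Basis. norm (frechet_derivative f (at x) b))"
        by (rule onorm_le_sum_Basis[OF has_derivative_bounded_linear[OF D]])
      also have "\<dots> \<le> B" using B[of x] \<open>x \<in> S\<close> S by (auto simp: sum_nonneg)
      finally show "onorm (frechet_derivative f (at x)) \<le> B" .
    qed
    thus "dist (f p) (f q) \<le> B * dist p q" by (simp add: dist_norm)
  qed
  thus ?thesis using that by blast
qed

lemma Cinf_on_local_trajectory:
  fixes v :: "'a::euclidean_space \<Rightarrow> 'a"
  assumes v: "Cinf_on W v" and "open V" "V \<subseteq> W" "p \<in> V"
  obtains \<delta> c where "\<delta> > 0" "c 0 = p"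
    "\<And>t. t \<in> {0..\<delta>} \<Longrightarrow> c t \<in> V \<and> (c has_vector_derivative v (c t)) (at t within {0..\<delta>})"
proof -
  obtain r where "r > 0" "cball p r \<subseteq> V"
    using open_contains_cball[THEN iffD1, OF \<open>open V\<close>, rule_format, OF \<open>p \<in> V\<close>] by blast
  with \<open>V \<subseteq> W\<close> have "cball p r \<subseteq> W" by simp
  obtain M where "M \<ge> 0" and M: "\<And>q. q \<in> cball p r \<Longrightarrow> norm (v q) \<le> M"
    using continuous_on_compact_bound[OF compact_cball
        continuous_on_subset[OF Cinf_on_continuous_on[OF v] \<open>cball p r \<subseteq> W\<close>]] by blast
  obtain B where B: "B-lipschitz_on (cball p r) v"
    using Cinf_on_lipschitz_on_convex[OF v compact_cball \<open>cball p r \<subseteq> W\<close>] convex_cball by blast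
  define \<delta> where "\<delta> = min (r / (M + 1)) (1 / (B + 1))"
  have "B \<ge> 0" using B by (rule lipschitz_on_nonneg)
  have "\<delta> > 0" using \<open>r > 0\<close> \<open>M \<ge> 0\<close> \<open>B \<ge> 0\<close> by (simp add: \<delta>_def)
  have "\<delta> * M \<le> r / (M + 1) * M" using \<open>M \<ge> 0\<close> by (intro mult_right_mono) (auto simp: \<delta>_def)
  also have "\<dots> \<le> r" using \<open>r > 0\<close> \<open>M \<ge> 0\<close> by (simp add: field_simps)
  finally have "(\<delta> - 0) * M \<le> r" by simp
  have "\<delta> * B \<le> 1 / (B + 1) * B" using \<open>B \<ge> 0\<close> by (intro mult_right_mono) (auto simp: \<delta>_def)
  also have "\<dots> < 1" using \<open>B \<ge> 0\<close> by (simp add: field_simps)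
  finally have "(\<delta> - 0) * B < 1" by simp
  have "\<exists>c. c 0 = p \<and> (\<forall>t\<in>{0..\<delta>}. c t \<in> cball p r \<and>
      (c has_vector_derivative v (c t)) (at t within {0..\<delta>}))"
  proof (rule ode_local_existence[where F="\<lambda>t q. v q" and ta=0 and tb=\<delta> and p=p and r=r and M=M and L=B])
    fix u assume "continuous_on {0..\<delta>} u" "u ` {0..\<delta>} \<subseteq> cball p r"
    with \<open>cball p r \<subseteq> W\<close> show "continuous_on {0..\<delta>} (\<lambda>s. v (u s))"
      by (intro continuous_on_compose2[OF Cinf_on_continuous_on[OF v]]) auto
  next
    fix t q assume "q \<in> cball p r"
    thus "norm (v q) \<le> M" by (rule M)
  next
    show "B-lipschitz_on (cball p r) v" by (fact B)
  next
    fix c assume "c 0 = p" and c: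
      "\<And>t. t \<in> {0..\<delta>} \<Longrightarrow> c t \<in> cball p r \<and> (c has_vector_derivative v (c t)) (at t within {0..\<delta>})"
    thus "\<exists>c. c 0 = p \<and> (\<forall>t\<in>{0..\<delta>}. c t \<in> cball p r \<and>
      (c has_vector_derivative v (c t)) (at t within {0..\<delta>}))"
      using c by (intro exI[of _ c] conjI ballI \<open>c 0 = p\<close>) (simp_all del: mem_cball)
  qed (simp_all only: \<open>\<delta> > 0\<close> \<open>r > 0\<close> \<open>M \<ge> 0\<close> \<open>(\<delta> - 0) * M \<le> r\<close> \<open>(\<delta> - 0) * B < 1\<close>)
  then obtain c where "c 0 = p" and c:
    "\<And>t. t \<in> {0..\<delta>} \<Longrightarrow> c t \<in> cball p r \<and> (c has_vector_derivative v (c t)) (at t within {0..\<delta>})"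
    by auto
  show ?thesis
  proof (rule that[of \<delta> c, OF \<open>\<delta> > 0\<close> \<open>c 0 = p\<close>])
    fix t assume "t \<in> {0..\<delta>}"
    note ct = c[OF this]
    have "c t \<in> V" using conjunct1[OF ct] \<open>cball p r \<subseteq> V\<close> by (rule subsetD[rotated])
    thus "c t \<in> V \<and> (c has_vector_derivative v (c t)) (at t within {0..\<delta>})"
      using conjunct2[OF ct] by (rule conjI)
  qed
qed

lemma has_real_derivative_ln_cmod:
  fixes x :: "real \<Rightarrow> complex"
  assumes "(x has_vector_derivative x') (at t within S)" "x t \<noteq> 0"
  shows "((\<lambda>t. ln (cmod (x t))) has_real_derivative Re (x' / x t)) (at t within S)"
proof -
  define g where "g t = Re (x t * cnj (x t))" for t
  have "((\<lambda>t. x t * cnj (x t)) has_vector_derivative (x t * cnj x' + x' * cnj (x t))) (at t within S)"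
    using assms(1) by (intro derivative_intros) auto
  hence "(g has_real_derivative Re (x t * cnj x' + x' * cnj (x t))) (at t within S)"
    unfolding has_real_derivative_iff_has_vector_derivative g_def
    by (rule bounded_linear.has_vector_derivative[OF bounded_linear_Re])
  moreover have "g t > 0" using assms(2) by (simp add: g_def complex_mult_cnj cmod_power2[symmetric])
  ultimately have "((\<lambda>t. ln (g t) / 2) has_real_derivative
      inverse (g t) * Re (x t * cnj x' + x' * cnj (x t)) / 2) (at t within S)"
    by (intro DERIV_cdivide DERIV_chain2[OF DERIV_ln])
  moreover have "ln (g s) / 2 = ln (cmod (x s))" for s
    by (cases "x s = 0") (simp_all add: g_def complex_mult_cnj cmod_def ln_sqrt)
  moreover have "inverse (g t) * Re (x t * cnj x' + x' * cnj (x t)) / 2 = Re (x' / x t)"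
  proof -
    have key: "inverse G * (2 * A) / 2 = A / G" for A G :: real
      by (cases "G = 0") (simp_all add: field_simps)
    have "g t = (Re (x t))\<^sup>2 + (Im (x t))\<^sup>2" by (simp add: g_def complex_mult_cnj)
    moreover have "Re (x t * cnj x' + x' * cnj (x t)) = 2 * (Re x' * Re (x t) + Im x' * Im (x t))"
      by (simp add: algebra_simps)
    ultimately show ?thesis unfolding Re_divide by (simp only: key)
  qed
  ultimately show ?thesis by simp
qed

lemma has_real_derivative_nonneg_at_left_min:
  fixes f :: "real \<Rightarrow> real"
  assumes "(f has_real_derivative D) (at a within {a..b})" "a < b" "\<And>t. t \<in> {a..b} \<Longrightarrow> f a \<le> f t"
  shows "0 \<le> D"
proof -
  have "((\<lambda>y. (f y - f a) / (y - a)) \<longlongrightarrow> D) (at a within {a..b})"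
    using assms(1) by (simp add: has_field_derivative_iff)
  moreover have "\<forall>\<^sub>F y in at a within {a..b}. 0 \<le> (f y - f a) / (y - a)"
    unfolding eventually_at_filter using assms(3) by (auto intro!: always_eventually divide_nonneg_nonneg)
  moreover have "at a within {a..b} \<noteq> bot" using assms(2) by (simp add: at_within_Icc_at_right)
  ultimately show ?thesis by (intro tendsto_lowerbound[of "\<lambda>y. (f y - f a) / (y - a)" D]) auto
qed

lemma nonincreasing_if_derivative_nonpos:
  fixes f :: "real \<Rightarrow> real"
  assumes deriv: "\<And>s. s \<in> {a..b} \<Longrightarrow> (f has_real_derivative f' s) (at s within {a..b})"
    and nonpos: "\<And>s. s \<in> {a..b} \<Longrightarrow> f' s \<le> 0" and "t \<in> {a..b}"
  shows "f t \<le> f a"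
proof -
  have sub: "{a..t} \<subseteq> {a..b}" using \<open>t \<in> {a..b}\<close> by auto
  have "(f has_vector_derivative f' s) (at s within {a..t})" if "s \<in> {a..t}" for s
    unfolding has_real_derivative_iff_has_vector_derivative[symmetric]
    by (rule DERIV_subset[OF deriv sub]) (use that sub in blast)
  hence "(f' has_integral (f t - f a)) {a..t}"
    using \<open>t \<in> {a..b}\<close> by (intro fundamental_theorem_of_calculus) simp_all
  hence "f t - f a \<le> 0"
    by (rule has_integral_le[OF _ has_integral_0]) (use nonpos sub in blast)
  thus ?thesis by simp
qed

lemma constant_if_derivative_bounded_by_displacement:
  fixes f :: "real \<Rightarrow> 'a::real_normed_vector"
  assumes "0 \<le> L" "(b - a) * L < 1"
    and deriv: "\<And>s. s \<in> {a..b} \<Longrightarrow> (f has_vector_derivative f' s) (at s within {a..b})"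
    and bound: "\<And>s. s \<in> {a..b} \<Longrightarrow> norm (f' s) \<le> L * norm (f s - f a)"
    and "t \<in> {a..b}"
  shows "f t = f a"
proof -
  have "continuous_on {a..b} f"
    unfolding continuous_on_eq_continuous_within using has_vector_derivative_continuous[OF deriv] by blast
  hence "continuous_on {a..b} (\<lambda>s. norm (f s - f a))" by (intro continuous_intros)
  moreover have "{a..b} \<noteq> {}" using \<open>t \<in> {a..b}\<close> by auto
  ultimately obtain m where m: "m \<in> {a..b}" and max: "\<And>s. s \<in> {a..b} \<Longrightarrow> norm (f s - f a) \<le> norm (f m - f a)"
    using continuous_attains_sup[OF compact_Icc] by blast
  define N where "N = norm (f m - f a)"
  have "norm (f m - f a) \<le> (L * N) * norm (m - a)"
  proof (rule differentiable_bound[of "{a..m}" f "\<lambda>s h. h *\<^sub>R f' s"])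
    fix s assume s: "s \<in> {a..m}"
    hence "s \<in> {a..b}" using m by auto
    have "(f has_vector_derivative f' s) (at s within {a..m})"
      by (rule has_vector_derivative_within_subset[OF deriv[OF \<open>s \<in> {a..b}\<close>]]) (use m in auto)
    thus "(f has_derivative (\<lambda>h. h *\<^sub>R f' s)) (at s within {a..m})"
      by (simp add: has_vector_derivative_def)
    have "onorm (\<lambda>h. h *\<^sub>R f' s) = norm (f' s)"
      using onorm_scaleR_left[OF bounded_linear_ident, of "f' s"] by (simp add: onorm_id)
    also have "\<dots> \<le> L * N"
      unfolding N_def by (rule order_trans[OF bound[OF \<open>s \<in> {a..b}\<close>] mult_left_mono[OF max[OF \<open>s \<in> {a..b}\<close>] \<open>0 \<le> L\<close>]])
    finally show "onorm (\<lambda>h. h *\<^sub>R f' s) \<le> L * N" .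
  qed (use m in auto)
  also have "\<dots> \<le> (L * N) * (b - a)"
    using m \<open>0 \<le> L\<close> by (intro mult_left_mono) (auto simp: N_def)
  finally have "N * (1 - (b - a) * L) \<le> 0" by (simp add: N_def algebra_simps)
  hence "N = 0" using \<open>(b - a) * L < 1\<close> by (simp add: N_def mult_le_0_iff)
  thus ?thesis using max[OF \<open>t \<in> {a..b}\<close>] by (simp add: N_def)
qed

text \<open>The points \<open>q s\<close> are comparison points on the slice at which \<open>F s\<close> is tangent to it;
  the Lipschitz bound turns the distance to the slice into a Gronwall-type inequality.\<close>
lemma trajectory_stays_in_slice:
  fixes c :: "real \<Rightarrow> 'a::real_normed_vector" and \<pi> :: "'a \<Rightarrow> 'b::real_normed_vector"
  assumes "bounded_linear \<pi>" and "\<And>x. norm (\<pi> x) \<le> norm x"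
    and L: "0 \<le> L" "(b - a) * L < 1"
    and deriv: "\<And>s. s \<in> {a..b} \<Longrightarrow> (c has_vector_derivative F s (c s)) (at s within {a..b})"
    and lip: "\<And>s. s \<in> {a..b} \<Longrightarrow> L-lipschitz_on B (F s)"
    and near: "\<And>s. s \<in> {a..b} \<Longrightarrow> c s \<in> B \<and> q s \<in> B \<and> norm (c s - q s) \<le> norm (\<pi> (c s) - \<pi> (c a))"
    and tangent: "\<And>s. s \<in> {a..b} \<Longrightarrow> \<pi> (F s (q s)) = 0"
    and "t \<in> {a..b}"
  shows "\<pi> (c t) = \<pi> (c a)"
proof (rule constant_if_derivative_bounded_by_displacement[where f="\<lambda>s. \<pi> (c s)", OF L _ _ \<open>t \<in> {a..b}\<close>])
  fix s assume s: "s \<in> {a..b}"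
  show "((\<lambda>s. \<pi> (c s)) has_vector_derivative \<pi> (F s (c s))) (at s within {a..b})"
    by (rule bounded_linear.has_vector_derivative[OF \<open>bounded_linear \<pi>\<close> deriv[OF s]])
  have "norm (\<pi> (F s (c s))) = norm (\<pi> (F s (c s) - F s (q s)))"
    using tangent[OF s] by (simp add: linear_diff bounded_linear.linear[OF \<open>bounded_linear \<pi>\<close>])
  also have "\<dots> \<le> norm (F s (c s) - F s (q s))" by fact
  also have "\<dots> \<le> L * norm (c s - q s)" using near[OF s] by (intro lipschitz_on_normD[OF lip[OF s]]) auto
  also have "\<dots> \<le> L * norm (\<pi> (c s) - \<pi> (c a))" using near[OF s] \<open>0 \<le> L\<close> by (intro mult_left_mono) auto
  finally show "norm (\<pi> (F s (c s))) \<le> L * norm (\<pi> (c s) - \<pi> (c a))" .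
qed

lemma continuous_on_Icc_stays_in_open:
  fixes c :: "real \<Rightarrow> 'a::topological_space"
  assumes "continuous_on {a..b} c" "a \<le> \<tau>" "\<tau> < b" "open V" "c \<tau> \<in> V" "0 < \<kappa>"
  obtains \<eta> where "0 < \<eta>" "\<eta> \<le> \<kappa>" "\<tau> + \<eta> \<le> b" "\<And>s. s \<in> {\<tau>..\<tau> + \<eta>} \<Longrightarrow> c s \<in> V"
proof -
  have "continuous (at \<tau> within {a..b}) c"
    using assms(1-3) by (simp add: continuous_on_eq_continuous_within)
  hence "\<forall>\<^sub>F s in at \<tau> within {a..b}. c s \<in> V"
    unfolding continuous_within using \<open>open V\<close> \<open>c \<tau> \<in> V\<close> by (rule topological_tendstoD)
  then obtain d where "d > 0" and d: "\<And>s. s \<in> {a..b} \<Longrightarrow> s \<noteq> \<tau> \<Longrightarrow> dist s \<tau> < d \<Longrightarrow> c s \<in> V"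
    unfolding eventually_at by blast
  define \<eta> where "\<eta> = min (d / 2) (min \<kappa> (b - \<tau>))"
  have "\<eta> < d" using \<open>d > 0\<close> by (simp add: \<eta>_def)
  have "0 < \<eta>" "\<eta> \<le> \<kappa>" "\<tau> + \<eta> \<le> b"
    using \<open>d > 0\<close> \<open>0 < \<kappa>\<close> \<open>\<tau> < b\<close> by (simp_all add: \<eta>_def)
  moreover have "c s \<in> V" if s: "s \<in> {\<tau>..\<tau> + \<eta>}" for s
  proof (cases "s = \<tau>")
    case False
    have "dist s \<tau> < d" using s \<open>\<eta> < d\<close> by (simp add: dist_real_def)
    moreover have "s \<in> {a..b}" using s \<open>a \<le> \<tau>\<close> \<open>\<tau> + \<eta> \<le> b\<close> by simp
    ultimately show ?thesis using d False by blast
  qed (use \<open>c \<tau> \<in> V\<close> in simp)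
  ultimately show ?thesis by (rule that)
qed

lemma continuous_induction_Icc:
  fixes c :: "real \<Rightarrow> 'a::topological_space"
  assumes "continuous_on {0..T} c" "closed K" "c 0 \<in> K"
    and step: "\<And>\<tau>. 0 \<le> \<tau> \<Longrightarrow> \<tau> < T \<Longrightarrow> (\<And>s. s \<in> {0..\<tau>} \<Longrightarrow> c s \<in> K) \<Longrightarrow>
                 \<exists>\<eta>>0. \<tau> + \<eta> \<le> T \<and> (\<forall>s\<in>{0..\<tau> + \<eta>}. c s \<in> K)"
    and "t \<in> {0..T}"
  shows "c t \<in> K"
proof -
  define S where "S = {t \<in> {0..T}. \<forall>s\<in>{0..t}. c s \<in> K}"
  have "0 \<in> S" using assms(3,5) by (auto simp: S_def)
  have "bdd_above S" by (auto simp: S_def bdd_above_def)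
  define \<tau> where "\<tau> = Sup S"
  have "0 \<le> \<tau>" unfolding \<tau>_def using \<open>0 \<in> S\<close> \<open>bdd_above S\<close> by (rule cSup_upper)
  have "\<tau> \<le> T" unfolding \<tau>_def using \<open>0 \<in> S\<close> by (intro cSup_least) (auto simp: S_def)
  have below: "c s \<in> K" if s: "s \<in> {0..<\<tau>}" for s
  proof -
    have "s < Sup S" using s by (simp add: \<tau>_def)
    then obtain t where "t \<in> S" "s < t" using less_cSup_iff[OF _ \<open>bdd_above S\<close>] \<open>0 \<in> S\<close> by blast
    thus ?thesis using s by (auto simp: S_def)
  qed
  have upto: "c s \<in> K" if "s \<in> {0..\<tau>}" for s
  proof (cases "\<tau> = 0")
    case True
    thus ?thesis using that assms(3) by simp
  next
    case False
    hence "closure {0..<\<tau>} = {0..\<tau>}" using \<open>0 \<le> \<tau>\<close> by simp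
    moreover have "c ` closure {0..<\<tau>} \<subseteq> K"
    proof (rule image_closure_subset[OF _ \<open>closed K\<close>])
      show "continuous_on (closure {0..<\<tau>}) c"
        using False \<open>0 \<le> \<tau>\<close> \<open>\<tau> \<le> T\<close> by (auto intro: continuous_on_subset[OF assms(1)])
    qed (use below in auto)
    ultimately show ?thesis using that by blast
  qed
  have "\<tau> = T"
  proof (rule ccontr)
    assume "\<tau> \<noteq> T"
    hence "\<tau> < T" using \<open>\<tau> \<le> T\<close> by simp
    then obtain \<eta> where "0 < \<eta>" "\<tau> + \<eta> \<le> T" "\<forall>s\<in>{0..\<tau> + \<eta>}. c s \<in> K"
      using step[OF \<open>0 \<le> \<tau>\<close> _ upto] by blast
    hence "\<tau> + \<eta> \<in> S" using \<open>0 \<le> \<tau>\<close> by (simp add: S_def)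
    hence "\<tau> + \<eta> \<le> \<tau>" unfolding \<tau>_def using \<open>bdd_above S\<close> by (rule cSup_upper)
    thus False using \<open>0 < \<eta>\<close> by simp
  qed
  thus ?thesis using upto assms(5) by simp
qed

lemma has_vector_derivative_within_Un:
  assumes "(f has_vector_derivative D) (at x within S)" "(f has_vector_derivative D) (at x within T)"
  shows "(f has_vector_derivative D) (at x within S \<union> T)"
  using assms unfolding has_vector_derivative_def has_derivative_within
  by (auto simp: Lim_within_Un)

lemma has_vector_derivative_within_not_islimpt:
  assumes "\<not> x islimpt S"
  shows "(f has_vector_derivative D) (at x within S)"
proof -
  have "at x within S = bot" using assms by (simp add: trivial_limit_within)
  thus ?thesis by (simp add: has_vector_derivative_def has_derivative_def bounded_linear_scaleR_left)
qed

lemma has_vector_derivative_if_glue: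
  fixes x y :: "real \<Rightarrow> 'a::real_normed_vector"
  assumes "a \<le> b" "b \<le> e" "x b = y b"
    and dx: "\<And>t. t \<in> {a..b} \<Longrightarrow> (x has_vector_derivative F t (x t)) (at t within {a..b})"
    and dy: "\<And>t. t \<in> {b..e} \<Longrightarrow> (y has_vector_derivative F t (y t)) (at t within {b..e})"
    and "t \<in> {a..e}"
  defines "z \<equiv> \<lambda>t. if t \<le> b then x t else y t"
  shows "(z has_vector_derivative F t (z t)) (at t within {a..e})"
proof -
  have "(z has_vector_derivative F t (z t)) (at t within {a..b})"
  proof (cases "t \<le> b")
    case True
    hence "(x has_vector_derivative F t (z t)) (at t within {a..b})"
      using dx \<open>t \<in> {a..e}\<close> by (simp add: z_def)
    thus ?thesis
      by (rule has_vector_derivative_transform[rotated 2]) (use True \<open>t \<in> {a..e}\<close> in \<open>simp_all add: z_def\<close>)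
  next
    case False
    show ?thesis
    proof (intro has_vector_derivative_within_not_islimpt notI)
      assume "t islimpt {a..b}"
      hence "t \<in> {a..b}" using closed_limpt closed_atLeastAtMost by blast
      thus False using False by simp
    qed
  qed
  moreover have "(z has_vector_derivative F t (z t)) (at t within {b..e})"
  proof (cases "b \<le> t")
    case True
    hence "(y has_vector_derivative F t (z t)) (at t within {b..e})"
      using dy \<open>t \<in> {a..e}\<close> \<open>x b = y b\<close> by (simp add: z_def)
    thus ?thesis
      by (rule has_vector_derivative_transform[rotated 2])
        (use True \<open>t \<in> {a..e}\<close> \<open>x b = y b\<close> in \<open>auto simp: z_def\<close>)
  next
    case False
    show ?thesis
    proof (intro has_vector_derivative_within_not_islimpt notI)
      assume "t islimpt {b..e}"
      hence "t \<in> {b..e}" using closed_limpt closed_atLeastAtMost by blast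
      thus False using False by simp
    qed
  qed
  ultimately have "(z has_vector_derivative F t (z t)) (at t within {a..b} \<union> {b..e})"
    by (rule has_vector_derivative_within_Un)
  moreover have "{a..b} \<union> {b..e} = {a..e}" using assms(1,2) by auto
  ultimately show ?thesis by simp
qed

lemma Re_log_deriv_nonneg_if_cmod_min:
  fixes x :: "real \<Rightarrow> complex"
  assumes "(x has_vector_derivative x') (at 0 within {0..\<delta>})" "0 < \<delta>" "x 0 \<noteq> 0"
    and "\<And>t. t \<in> {0..\<delta>} \<Longrightarrow> cmod (x 0) \<le> cmod (x t)"
  shows "0 \<le> Re (x' / x 0)"
proof (rule has_real_derivative_nonneg_at_left_min)
  show "((\<lambda>t. ln (cmod (x t))) has_real_derivative Re (x' / x 0)) (at 0 within {0..\<delta>})"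
    using assms(1,3) by (rule has_real_derivative_ln_cmod)
  fix t assume "t \<in> {0..\<delta>}"
  hence "0 < cmod (x 0)" "cmod (x 0) \<le> cmod (x t)" using assms(3,4) by auto
  thus "ln (cmod (x 0)) \<le> ln (cmod (x t))" by (subst ln_le_cancel_iff) auto
qed fact

lemma Re_log_deriv_nonpos_if_cmod_max:
  fixes x :: "real \<Rightarrow> complex"
  assumes "(x has_vector_derivative x') (at 0 within {0..\<delta>})" "0 < \<delta>"
    and "\<And>t. t \<in> {0..\<delta>} \<Longrightarrow> x t \<noteq> 0" "\<And>t. t \<in> {0..\<delta>} \<Longrightarrow> cmod (x t) \<le> cmod (x 0)"
  shows "Re (x' / x 0) \<le> 0"
proof -
  have "x 0 \<noteq> 0" using assms(2,3) by simp
  have "0 \<le> - Re (x' / x 0)"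
  proof (rule has_real_derivative_nonneg_at_left_min)
    show "((\<lambda>t. - ln (cmod (x t))) has_real_derivative - Re (x' / x 0)) (at 0 within {0..\<delta>})"
      using assms(1) \<open>x 0 \<noteq> 0\<close> by (intro DERIV_minus has_real_derivative_ln_cmod)
    fix t assume "t \<in> {0..\<delta>}"
    thus "- ln (cmod (x 0)) \<le> - ln (cmod (x t))" using assms(3,4) by simp
  qed fact
  thus ?thesis by simp
qed

lemma cmod_nonincreasing_if_Re_log_deriv_nonpos:
  fixes x :: "real \<Rightarrow> complex"
  assumes deriv: "\<And>s. s \<in> {a..b} \<Longrightarrow> (x has_vector_derivative x' s) (at s within {a..b})"
    and nz: "\<And>s. s \<in> {a..b} \<Longrightarrow> x s \<noteq> 0" and nonpos: "\<And>s. s \<in> {a..b} \<Longrightarrow> Re (x' s / x s) \<le> 0"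
    and "t \<in> {a..b}"
  shows "cmod (x t) \<le> cmod (x a)"
proof -
  have "ln (cmod (x t)) \<le> ln (cmod (x a))"
  proof (rule nonincreasing_if_derivative_nonpos[where f="\<lambda>t. ln (cmod (x t))" and f'="\<lambda>s. Re (x' s / x s)"])
    fix s assume s: "s \<in> {a..b}"
    show "((\<lambda>t. ln (cmod (x t))) has_real_derivative Re (x' s / x s)) (at s within {a..b})"
      by (rule has_real_derivative_ln_cmod[OF deriv[OF s] nz[OF s]])
    show "Re (x' s / x s) \<le> 0" by (rule nonpos[OF s])
  qed fact
  moreover have "0 < cmod (x t)" "0 < cmod (x a)" using nz \<open>t \<in> {a..b}\<close> by auto
  ultimately show ?thesis by simp
qed

section \<open>Adapted vector fields\<close>

lemma absH_pos_iff: "0 < absH l1 l2 p \<longleftrightarrow> fst p \<noteq> 0 \<and> snd p \<noteq> 0"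
  by (auto simp: absH_def)

lemma continuous_on_absH: "0 < l1 \<Longrightarrow> 0 < l2 \<Longrightarrow> continuous_on S (absH l1 l2)"
  unfolding absH_def[abs_def] by (intro continuous_intros continuous_on_powr') auto

lemma ln_absH:
  assumes "fst p \<noteq> 0" "snd p \<noteq> 0"
  shows "ln (absH l1 l2 p) = ln (cmod (fst p)) / l1 + ln (cmod (snd p)) / l2"
  using assms by (simp add: absH_def ln_mult ln_powr)

lemma absH_eq_if_H_level:
  assumes "p \<in> H_level l1 l2 (of_real c)" "0 < c"
  shows "absH l1 l2 p = c"
proof -
  obtain lx ly where x: "exp lx = fst p" and y: "exp ly = snd p"
    and c: "exp (lx / of_real l1 + ly / of_real l2) = of_real c"
    using assms(1) by (auto simp: H_level_def)
  have "cmod (fst p) powr (1 / l1) = exp (Re lx / l1)" using x[symmetric] by (simp add: powr_def)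
  moreover have "cmod (snd p) powr (1 / l2) = exp (Re ly / l2)" using y[symmetric] by (simp add: powr_def)
  moreover have "exp (Re lx / l1 + Re ly / l2) = c"
    using arg_cong[OF c, of cmod] \<open>0 < c\<close> by simp
  ultimately show ?thesis by (simp add: absH_def exp_add)
qed

locale adapted_fields =
  fixes l1 l2 h :: real
    and v1 vI :: "complex \<times> complex \<Rightarrow> complex \<times> complex"
    and W :: "(complex \<times> complex) set"
  assumes l1: "0 < l1" and l2: "0 < l2" and h_lt_1: "h < 1"
    and U_subset_W: "Us l1 l2 h \<subseteq> W" and smooth_v1: "Cinf_on W v1" and smooth_vI: "Cinf_on W vI"
    and dlogH_fields: "\<forall>p\<in>Us l1 l2 h. fst p \<noteq> 0 \<and> snd p \<noteq> 0 \<longrightarrow>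
           dlogH l1 l2 p (v1 p) = 1 \<and> dlogH l1 l2 p (vI p) = \<i>"
    and v1_flow_expands: "\<forall>c a b. (\<forall>t\<in>{a..b}. c t \<in> Us l1 l2 h \<and>
                   (c has_vector_derivative v1 (c t)) (at t within {a..b})) \<longrightarrow>
           (\<forall>s\<in>{a..b}. \<forall>t\<in>{a..b}. s \<le> t \<longrightarrow>
              cmod (fst (c s)) \<le> cmod (fst (c t)) \<and> cmod (snd (c s)) \<le> cmod (snd (c t)))"
    and vI_flow_contracts: "\<forall>c a b. (\<forall>t\<in>{a..b}. c t \<in> Us l1 l2 h \<and>
                   (c has_vector_derivative vI (c t)) (at t within {a..b})) \<longrightarrow>
           (\<forall>s\<in>{a..b}. \<forall>t\<in>{a..b}. s \<le> t \<longrightarrow>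
              cmod (fst (c t)) \<le> cmod (fst (c s)) \<and> cmod (snd (c t)) \<le> cmod (snd (c s)))"
    and tangent_y: "\<exists>\<epsilon>>0. \<forall>p\<in>Us l1 l2 h. cmod (snd p) > 1 - \<epsilon> \<longrightarrow> snd (v1 p) = 0 \<and> snd (vI p) = 0"
    and tangent_x: "\<exists>\<epsilon>>0. \<forall>p\<in>Us l1 l2 h. cmod (fst p) > 1 - \<epsilon> \<longrightarrow> fst (v1 p) = 0 \<and> fst (vI p) = 0"
begin

abbreviation "U \<equiv> Us l1 l2 h"
abbreviation "aH \<equiv> absH l1 l2"

lemma fields_tangent_x: "p \<in> U \<Longrightarrow> cmod (fst p) = 1 \<Longrightarrow> fst (v1 p) = 0 \<and> fst (vI p) = 0"
  using tangent_x by force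

lemma fields_tangent_y: "p \<in> U \<Longrightarrow> cmod (snd p) = 1 \<Longrightarrow> snd (v1 p) = 0 \<and> snd (vI p) = 0"
  using tangent_y by force

lemma log_coordinates_fields:
  assumes "p \<in> U" "fst p \<noteq> 0" "snd p \<noteq> 0"
  shows "(fst (v1 p) / fst p) / l1 + (snd (v1 p) / snd p) / l2 = 1"
    and "(fst (vI p) / fst p) / l1 + (snd (vI p) / snd p) / l2 = \<i>"
  using dlogH_fields assms by (auto simp: dlogH_def field_simps)

definition U_core :: "(complex \<times> complex) set" where
  "U_core = {p. fst p \<noteq> 0 \<and> snd p \<noteq> 0 \<and> cmod (fst p) < 1 \<and> cmod (snd p) < 1 \<and> aH p < h}"

lemma open_U_core: "open U_core"
  unfolding U_core_def using l1 l2
  by (intro open_Collect_conj open_Collect_neq open_Collect_less continuous_intros continuous_on_absH) auto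

lemma U_core_subset_U: "U_core \<subseteq> U"
  by (auto simp: U_core_def Us_def bidisc_def)

lemma v1_log_coordinates_nondecreasing:
  assumes "p \<in> U_core"
  shows "0 \<le> Re (fst (v1 p) / fst p) \<and> 0 \<le> Re (snd (v1 p) / snd p)"
proof -
  obtain \<delta> c where "0 < \<delta>" "c 0 = p" and c:
    "\<And>t. t \<in> {0..\<delta>} \<Longrightarrow> c t \<in> U_core \<and> (c has_vector_derivative v1 (c t)) (at t within {0..\<delta>})"
    using Cinf_on_local_trajectory[OF smooth_v1 open_U_core _ assms] U_core_subset_U U_subset_W by blast
  hence "\<forall>t\<in>{0..\<delta>}. c t \<in> U \<and> (c has_vector_derivative v1 (c t)) (at t within {0..\<delta>})"
    using U_core_subset_U by blast
  with v1_flow_expands have mono: "\<forall>s\<in>{0..\<delta>}. \<forall>t\<in>{0..\<delta>}. s \<le> t \<longrightarrow> cmod (fst (c s)) \<le> cmod (fst (c t)) \<and> cmod (snd (c s)) \<le> cmod (snd (c t))"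
    by blast
  have "0 \<in> {0..\<delta>}" using \<open>0 < \<delta>\<close> by simp
  note D = conjunct2[OF c[OF this]]
  have "c 0 \<in> U_core" using \<open>c 0 = p\<close> assms by simp
  hence "0 \<le> Re (fst (v1 (c 0)) / fst (c 0)) \<and> 0 \<le> Re (snd (v1 (c 0)) / snd (c 0))"
    using mono \<open>0 \<in> {0..\<delta>}\<close>
    by (intro conjI Re_log_deriv_nonneg_if_cmod_min[OF _ \<open>0 < \<delta>\<close>]
        bounded_linear.has_vector_derivative[OF bounded_linear_fst D]
        bounded_linear.has_vector_derivative[OF bounded_linear_snd D]) (auto simp: U_core_def)
  thus ?thesis using \<open>c 0 = p\<close> by simp
qed

lemma vI_log_coordinates_nonincreasing:
  assumes "p \<in> U_core"
  shows "Re (fst (vI p) / fst p) \<le> 0 \<and> Re (snd (vI p) / snd p) \<le> 0"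
proof -
  obtain \<delta> c where "0 < \<delta>" "c 0 = p" and c:
    "\<And>t. t \<in> {0..\<delta>} \<Longrightarrow> c t \<in> U_core \<and> (c has_vector_derivative vI (c t)) (at t within {0..\<delta>})"
    using Cinf_on_local_trajectory[OF smooth_vI open_U_core _ assms] U_core_subset_U U_subset_W by blast
  hence "\<forall>t\<in>{0..\<delta>}. c t \<in> U \<and> (c has_vector_derivative vI (c t)) (at t within {0..\<delta>})"
    using U_core_subset_U by blast
  with vI_flow_contracts have mono: "\<forall>s\<in>{0..\<delta>}. \<forall>t\<in>{0..\<delta>}. s \<le> t \<longrightarrow> cmod (fst (c t)) \<le> cmod (fst (c s)) \<and> cmod (snd (c t)) \<le> cmod (snd (c s))"
    by blast
  have "0 \<in> {0..\<delta>}" using \<open>0 < \<delta>\<close> by simp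
  note D = conjunct2[OF c[OF this]]
  have nz: "fst (c t) \<noteq> 0 \<and> snd (c t) \<noteq> 0" if "t \<in> {0..\<delta>}" for t
    using c[OF that] by (simp add: U_core_def)
  have "Re (fst (vI (c 0)) / fst (c 0)) \<le> 0 \<and> Re (snd (vI (c 0)) / snd (c 0)) \<le> 0"
    using mono \<open>0 \<in> {0..\<delta>}\<close> nz
    by (intro conjI Re_log_deriv_nonpos_if_cmod_max[OF _ \<open>0 < \<delta>\<close>]
        bounded_linear.has_vector_derivative[OF bounded_linear_fst D]
        bounded_linear.has_vector_derivative[OF bounded_linear_snd D]) auto
  thus ?thesis using \<open>c 0 = p\<close> by simp
qed

lemma log_coordinate_signs:
  assumes "p \<in> U" "fst p \<noteq> 0" "snd p \<noteq> 0"
  shows "0 \<le> Re (fst (v1 p) / fst p) \<and> 0 \<le> Re (snd (v1 p) / snd p) \<and>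
         Re (fst (vI p) / fst p) = 0 \<and> Re (snd (vI p) / snd p) = 0"
proof -
  note d1 = log_coordinates_fields(1)[OF assms] and dI = log_coordinates_fields(2)[OF assms]
  have "cmod (fst p) \<le> 1" "cmod (snd p) \<le> 1" using assms(1) by (auto simp: Us_def bidisc_def)
  then consider "cmod (fst p) = 1" | "cmod (snd p) = 1" | "cmod (fst p) < 1" "cmod (snd p) < 1"
    by linarith
  thus ?thesis
  proof cases
    case 1
    hence x: "fst (v1 p) = 0" "fst (vI p) = 0" using fields_tangent_x[OF assms(1)] by auto
    have "snd (v1 p) / snd p = of_real l2" "snd (vI p) / snd p = \<i> * of_real l2"
      using d1 dI l2 by (simp_all add: x field_simps)
    thus ?thesis using l2 by (simp add: x)
  next
    case 2
    hence y: "snd (v1 p) = 0" "snd (vI p) = 0" using fields_tangent_y[OF assms(1)] by auto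
    have "fst (v1 p) / fst p = of_real l1" "fst (vI p) / fst p = \<i> * of_real l1"
      using d1 dI l1 by (simp_all add: y field_simps)
    thus ?thesis using l1 by (simp add: y)
  next
    case 3
    hence "p \<in> U_core" using assms by (auto simp: U_core_def Us_def)
    note v1 = v1_log_coordinates_nondecreasing[OF this] and vI = vI_log_coordinates_nonincreasing[OF this]
    have "Re (fst (vI p) / fst p) / l1 + Re (snd (vI p) / snd p) / l2 = 0"
      using arg_cong[OF dI, of Re] unfolding plus_complex.sel Re_divide_of_real by simp
    moreover have "Re (fst (vI p) / fst p) / l1 \<le> 0" "Re (snd (vI p) / snd p) / l2 \<le> 0"
      using vI l1 l2 by (simp_all add: divide_nonpos_pos)
    ultimately have "Re (fst (vI p) / fst p) / l1 = 0" "Re (snd (vI p) / snd p) / l2 = 0" by linarith+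
    thus ?thesis using v1 l1 l2 by simp
  qed
qed

lemma open_W: "open W"
  using smooth_v1 by (simp add: Cinf_on_def)

lemma cmod_lt_1_if_other_on_circle:
  assumes "aH p < 1"
  shows "cmod (fst p) = 1 \<Longrightarrow> cmod (snd p) < 1" and "cmod (snd p) = 1 \<Longrightarrow> cmod (fst p) < 1"
  using assms l1 l2 ge_one_powr_ge_zero[of "cmod (snd p)" "1 / l2"] ge_one_powr_ge_zero[of "cmod (fst p)" "1 / l1"]
  by (auto simp: absH_def not_less[symmetric])

definition U_nz :: "(complex \<times> complex) set" where
  "U_nz = {p \<in> U. fst p \<noteq> 0 \<and> snd p \<noteq> 0}"

lemma Re_log_coordinates_v1:
  assumes "p \<in> U_nz"
  shows "Re (fst (v1 p) / fst p) / l1 + Re (snd (v1 p) / snd p) / l2 = 1"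
  using arg_cong[OF log_coordinates_fields(1), of p Re] assms
  unfolding plus_complex.sel Re_divide_of_real by (simp add: U_nz_def)

end

section \<open>Transport along a curve\<close>

definition frozen :: "complex \<times> complex \<Rightarrow> (complex \<times> complex) set" where
  "frozen a = {p. (cmod (fst a) = 1 \<longrightarrow> fst p = fst a) \<and> (cmod (snd a) = 1 \<longrightarrow> snd p = snd a)}"

lemma closed_frozen: "closed (frozen a)"
proof -
  have "closed {p::complex \<times> complex. cmod (fst a) = 1 \<longrightarrow> fst p = fst a}"
    "closed {p::complex \<times> complex. cmod (snd a) = 1 \<longrightarrow> snd p = snd a}"
    by (cases "cmod (fst a) = 1"; cases "cmod (snd a) = 1";
        auto intro!: closed_Collect_eq continuous_on_fst continuous_on_snd continuous_on_id continuous_on_const)+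
  thus ?thesis unfolding frozen_def Collect_conj_eq by (rule closed_Int)
qed

locale transport = adapted_fields +
  fixes \<rho> :: "real \<Rightarrow> complex" and W\<rho> :: "real set" and h0 :: real
  assumes h0: "0 < h0" "h0 < h"
    and interval_W\<rho>: "{0..1} \<subseteq> W\<rho>" and smooth_\<rho>: "Cinf_on W\<rho> \<rho>"
    and \<rho>_0: "\<rho> 0 = of_real h0"
    and \<rho>_bounds: "\<forall>t\<in>{0..1}. \<rho> t \<noteq> 0 \<and> cmod (\<rho> t) \<le> h0"
    and cmod_\<rho>_decreasing: "\<forall>t\<in>{0..1}. \<exists>D<0. ((\<lambda>s. cmod (\<rho> s)) has_real_derivative D) (at t)"
begin

abbreviation "F \<equiv> lifting_field \<rho> v1 vI"

definition \<omega> :: "real \<Rightarrow> complex" where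
  "\<omega> t = vector_derivative \<rho> (at t) / \<rho> t"

lemma lifting_field_eq: "F t p = Re (\<omega> t) *\<^sub>R v1 p + Im (\<omega> t) *\<^sub>R vI p"
  by (simp add: lifting_field_def \<omega>_def Let_def)

lemma \<rho>_has_vector_derivative: "t \<in> {0..1} \<Longrightarrow> (\<rho> has_vector_derivative vector_derivative \<rho> (at t)) (at t)"
  using Cinf_on_has_derivative[OF smooth_\<rho>] interval_W\<rho>
  by (metis differentiableI subsetD vector_derivative_works)

lemma continuous_on_\<omega>: "continuous_on {0..1} \<omega>"
proof -
  have "frechet_derivative \<rho> (at x) 1 = vector_derivative \<rho> (at x)" if "x \<in> {0..1}" for x
  proof -
    have "(\<rho> has_derivative (\<lambda>h. h *\<^sub>R vector_derivative \<rho> (at x))) (at x)"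
      using \<rho>_has_vector_derivative[OF that] by (simp add: has_vector_derivative_def)
    thus ?thesis by (simp add: frechet_derivative_at[symmetric])
  qed
  hence "continuous_on {0..1} (\<lambda>x. vector_derivative \<rho> (at x))"
    using continuous_on_subset[OF Cinf_on_continuous_on_derivative[OF smooth_\<rho>] interval_W\<rho>]
    by (rule continuous_on_eq[rotated]) simp
  thus ?thesis unfolding \<omega>_def[abs_def] using \<rho>_bounds
    by (intro continuous_intros continuous_on_subset[OF Cinf_on_continuous_on[OF smooth_\<rho>] interval_W\<rho>]) auto
qed

lemma Re_\<omega>_neg: "t \<in> {0..1} \<Longrightarrow> Re (\<omega> t) < 0"
proof -
  assume t: "t \<in> {0..1}"
  obtain D where "D < 0" and D: "((\<lambda>s. cmod (\<rho> s)) has_real_derivative D) (at t)"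
    using cmod_\<rho>_decreasing t by blast
  have "\<rho> t \<noteq> 0" using \<rho>_bounds t by blast
  have "((\<lambda>s. ln (cmod (\<rho> s))) has_real_derivative Re (\<omega> t)) (at t)"
    unfolding \<omega>_def by (rule has_real_derivative_ln_cmod[OF \<rho>_has_vector_derivative[OF t] \<open>\<rho> t \<noteq> 0\<close>])
  moreover have "((\<lambda>s. ln (cmod (\<rho> s))) has_real_derivative D / cmod (\<rho> t)) (at t)"
    using D \<open>\<rho> t \<noteq> 0\<close> by (auto intro!: derivative_eq_intros)
  ultimately have "Re (\<omega> t) = D / cmod (\<rho> t)" by (rule DERIV_unique)
  thus ?thesis using \<open>D < 0\<close> \<open>\<rho> t \<noteq> 0\<close> by (simp add: divide_neg_pos)
qed

lemma \<omega>_bounded: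
  obtains A where "0 \<le> A" "\<And>t::real. t \<in> {0..1} \<Longrightarrow> \<bar>Re (\<omega> t)\<bar> \<le> A \<and> \<bar>Im (\<omega> t)\<bar> \<le> A"
proof -
  obtain A where "0 \<le> A" and A: "\<And>t. t \<in> {0..1} \<Longrightarrow> cmod (\<omega> t) \<le> A"
    using continuous_on_compact_bound[OF compact_Icc continuous_on_\<omega>] by blast
  show ?thesis
  proof (rule that[OF \<open>0 \<le> A\<close>])
    fix t :: real assume "t \<in> {0..1}"
    thus "\<bar>Re (\<omega> t)\<bar> \<le> A \<and> \<bar>Im (\<omega> t)\<bar> \<le> A"
      using order_trans[OF abs_Re_le_cmod A] order_trans[OF abs_Im_le_cmod A] by simp
  qed
qed

lemma lifting_field_lipschitz:
  assumes "compact C" "C \<subseteq> W"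
  obtains L where "\<And>S t. convex S \<Longrightarrow> S \<subseteq> C \<Longrightarrow> t \<in> {0..1} \<Longrightarrow> L-lipschitz_on S (F t)"
proof -
  obtain B1 where B1: "\<And>S. convex S \<Longrightarrow> S \<subseteq> C \<Longrightarrow> B1-lipschitz_on S v1"
    using Cinf_on_lipschitz_on_convex[OF smooth_v1 assms] by blast
  obtain B2 where B2: "\<And>S. convex S \<Longrightarrow> S \<subseteq> C \<Longrightarrow> B2-lipschitz_on S vI"
    using Cinf_on_lipschitz_on_convex[OF smooth_vI assms] by blast
  obtain A where A: "\<And>t. t \<in> {0..1} \<Longrightarrow> \<bar>Re (\<omega> t)\<bar> \<le> A \<and> \<bar>Im (\<omega> t)\<bar> \<le> A"
    using \<omega>_bounded by metis
  have "(A * B1 + A * B2)-lipschitz_on S (F t)" if "convex S" "S \<subseteq> C" "t \<in> {0..1}" for S t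
    unfolding lifting_field_eq using A[OF \<open>t \<in> {0..1}\<close>]
    by (intro lipschitz_on_add lipschitz_on_cmult_upper[OF B1[OF that(1,2)]]
        lipschitz_on_cmult_upper[OF B2[OF that(1,2)]]) simp_all
  thus ?thesis using that by blast
qed

lemma lifting_field_bounded:
  assumes "compact C" "C \<subseteq> W"
  obtains M where "0 \<le> M" "\<And>t p. t \<in> {0..1} \<Longrightarrow> p \<in> C \<Longrightarrow> norm (F t p) \<le> M"
proof -
  obtain M1 where M1: "\<And>p. p \<in> C \<Longrightarrow> norm (v1 p) \<le> M1"
    using continuous_on_compact_bound[OF assms(1) continuous_on_subset[OF Cinf_on_continuous_on[OF smooth_v1] assms(2)]]
    by blast
  obtain M2 where M2: "\<And>p. p \<in> C \<Longrightarrow> norm (vI p) \<le> M2"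
    using continuous_on_compact_bound[OF assms(1) continuous_on_subset[OF Cinf_on_continuous_on[OF smooth_vI] assms(2)]]
    by blast
  obtain A where "0 \<le> A" and A: "\<And>t. t \<in> {0..1} \<Longrightarrow> \<bar>Re (\<omega> t)\<bar> \<le> A \<and> \<bar>Im (\<omega> t)\<bar> \<le> A"
    using \<omega>_bounded by blast
  define M where "M = A * \<bar>M1\<bar> + A * \<bar>M2\<bar>"
  have "norm (F t p) \<le> M" if "t \<in> {0..1}" "p \<in> C" for t p
  proof -
    have "norm (F t p) \<le> \<bar>Re (\<omega> t)\<bar> * norm (v1 p) + \<bar>Im (\<omega> t)\<bar> * norm (vI p)"
      unfolding lifting_field_eq by (metis norm_scaleR norm_triangle_ineq)
    also have "\<dots> \<le> M"
      unfolding M_def using A[OF that(1)] M1[OF that(2)] M2[OF that(2)]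
      by (intro add_mono mult_mono) auto
    finally show ?thesis .
  qed
  moreover have "0 \<le> M" using \<open>0 \<le> A\<close> by (simp add: M_def)
  ultimately show ?thesis using that by blast
qed

lemma continuous_on_lifting_field_along:
  assumes "continuous_on S u" "S \<subseteq> {0..1}" "u ` S \<subseteq> W"
  shows "continuous_on S (\<lambda>s. F s (u s))"
  unfolding lifting_field_eq using assms
  by (intro continuous_intros continuous_on_subset[OF continuous_on_\<omega>]
      continuous_on_compose2[OF Cinf_on_continuous_on[OF smooth_v1]]
      continuous_on_compose2[OF Cinf_on_continuous_on[OF smooth_vI]]) auto

lemma log_coordinates_lifting_field:
  assumes "p \<in> U_nz" "t \<in> {0..1}"
  shows "Re (fst (F t p) / fst p) \<le> 0" "Re (snd (F t p) / snd p) \<le> 0"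
    and "Re (fst (F t p) / fst p) / l1 + Re (snd (F t p) / snd p) / l2 = Re (\<omega> t)"
proof -
  note signs = log_coordinate_signs[of p] and Re_v1 = Re_log_coordinates_v1[OF assms(1)]
  have "fst (F t p) / fst p = Re (\<omega> t) *\<^sub>R (fst (v1 p) / fst p) + Im (\<omega> t) *\<^sub>R (fst (vI p) / fst p)"
    "snd (F t p) / snd p = Re (\<omega> t) *\<^sub>R (snd (v1 p) / snd p) + Im (\<omega> t) *\<^sub>R (snd (vI p) / snd p)"
    by (simp_all add: lifting_field_eq scaleR_conv_of_real add_divide_distrib)
  hence "Re (fst (F t p) / fst p) = Re (\<omega> t) * Re (fst (v1 p) / fst p) + Im (\<omega> t) * Re (fst (vI p) / fst p)"
    "Re (snd (F t p) / snd p) = Re (\<omega> t) * Re (snd (v1 p) / snd p) + Im (\<omega> t) * Re (snd (vI p) / snd p)"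
    by (simp_all only: plus_complex.sel scaleR_complex.sel)
  hence x: "Re (fst (F t p) / fst p) = Re (\<omega> t) * Re (fst (v1 p) / fst p)"
    and y: "Re (snd (F t p) / snd p) = Re (\<omega> t) * Re (snd (v1 p) / snd p)"
    using signs assms(1) by (simp_all add: U_nz_def)
  show "Re (fst (F t p) / fst p) \<le> 0" "Re (snd (F t p) / snd p) \<le> 0"
    unfolding x y using signs assms Re_\<omega>_neg[OF assms(2)]
    by (auto simp: U_nz_def intro: mult_nonpos_nonneg)
  show "Re (fst (F t p) / fst p) / l1 + Re (snd (F t p) / snd p) / l2 = Re (\<omega> t)"
    unfolding x y using arg_cong[OF Re_v1, of "\<lambda>r. Re (\<omega> t) * r"] by (simp add: distrib_left)
qed

definition trajectory_on :: "real \<Rightarrow> (real \<Rightarrow> complex \<times> complex) \<Rightarrow> bool" where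
  "trajectory_on T c \<longleftrightarrow> (\<forall>t\<in>{0..T}. (c has_vector_derivative F t (c t)) (at t within {0..T}))"

lemma trajectory_on_restrict:
  assumes "trajectory_on T c" "t \<le> T"
  shows "trajectory_on t c"
  unfolding trajectory_on_def
proof
  fix s assume "s \<in> {0..t}"
  moreover have "{0..t} \<subseteq> {0..T}" using \<open>t \<le> T\<close> by auto
  ultimately have "(c has_vector_derivative F s (c s)) (at s within {0..T})"
    using assms(1) by (auto simp: trajectory_on_def)
  thus "(c has_vector_derivative F s (c s)) (at s within {0..t})"
    using \<open>{0..t} \<subseteq> {0..T}\<close> by (rule has_vector_derivative_within_subset)
qed

lemma continuous_on_trajectory: "trajectory_on T c \<Longrightarrow> continuous_on {0..T} c"
  unfolding trajectory_on_def continuous_on_eq_continuous_within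
  using has_vector_derivative_continuous by blast

lemma trajectory_on_extend:
  assumes "trajectory_on T c" "0 \<le> T" "T \<le> T'" "d T = c T"
    and "\<And>t. t \<in> {T..T'} \<Longrightarrow> (d has_vector_derivative F t (d t)) (at t within {T..T'})"
  shows "trajectory_on T' (\<lambda>t. if t \<le> T then c t else d t)"
  unfolding trajectory_on_def
proof
  fix t assume "t \<in> {0..T'}"
  moreover have "\<And>t. t \<in> {0..T} \<Longrightarrow> (c has_vector_derivative F t (c t)) (at t within {0..T})"
    using assms(1) by (simp add: trajectory_on_def)
  ultimately show "((\<lambda>t. if t \<le> T then c t else d t) has_vector_derivative
      F t (if t \<le> T then c t else d t)) (at t within {0..T'})"
    using has_vector_derivative_if_glue[where F=F and x=c and y=d, OF assms(2,3) assms(4)[symmetric] _ assms(5)] by blast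
qed

lemma trajectory_conserves_absH_over_cmod_\<rho>:
  assumes "0 \<le> t" "t \<le> 1" "trajectory_on t c" "\<And>s. s \<in> {0..t} \<Longrightarrow> c s \<in> U_nz"
  shows "ln (aH (c t)) - ln (cmod (\<rho> t)) = ln (aH (c 0)) - ln (cmod (\<rho> 0))"
proof -
  define \<psi> where "\<psi> s = ln (cmod (fst (c s))) / l1 + ln (cmod (snd (c s))) / l2 - ln (cmod (\<rho> s))" for s
  have D\<psi>: "(\<psi> has_real_derivative 0) (at s within {0..t})" if s: "s \<in> {0..t}" for s
  proof -
    have "s \<in> {0..1}" using s \<open>t \<le> 1\<close> by auto
    have "c s \<in> U_nz" by (rule assms(4)[OF s])
    hence nz: "fst (c s) \<noteq> 0" "snd (c s) \<noteq> 0" by (auto simp: U_nz_def)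
    have "\<rho> s \<noteq> 0" using \<rho>_bounds \<open>s \<in> {0..1}\<close> by blast
    have D: "(c has_vector_derivative F s (c s)) (at s within {0..t})"
      using assms(3) s by (simp add: trajectory_on_def)
    have "(\<psi> has_real_derivative Re (fst (F s (c s)) / fst (c s)) / l1 + Re (snd (F s (c s)) / snd (c s)) / l2
        - Re (vector_derivative \<rho> (at s) / \<rho> s)) (at s within {0..t})"
      unfolding \<psi>_def
      by (intro DERIV_diff DERIV_add DERIV_cdivide has_real_derivative_ln_cmod
          bounded_linear.has_vector_derivative[OF bounded_linear_fst D]
          bounded_linear.has_vector_derivative[OF bounded_linear_snd D]
          has_vector_derivative_at_within[OF \<rho>_has_vector_derivative[OF \<open>s \<in> {0..1}\<close>]] nz \<open>\<rho> s \<noteq> 0\<close>)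
    thus ?thesis
      using log_coordinates_lifting_field(3)[OF \<open>c s \<in> U_nz\<close> \<open>s \<in> {0..1}\<close>] by (simp add: \<omega>_def)
  qed
  have "\<exists>k. \<forall>s\<in>{0..t}. \<psi> s = k" by (rule has_field_derivative_zero_constant[OF convex_real_interval(5) D\<psi>])
  hence "\<psi> t = \<psi> 0" using \<open>0 \<le> t\<close> by auto
  moreover have "\<psi> s = ln (aH (c s)) - ln (cmod (\<rho> s))" if "s \<in> {0..t}" for s
    using assms(4)[OF that] by (simp add: \<psi>_def U_nz_def ln_absH)
  ultimately show ?thesis using \<open>0 \<le> t\<close> by simp
qed

lemma trajectory_cmod_nonincreasing:
  assumes "0 \<le> t" "t \<le> 1" "trajectory_on t c" "\<And>s. s \<in> {0..t} \<Longrightarrow> c s \<in> U_nz"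
  shows "cmod (fst (c t)) \<le> cmod (fst (c 0)) \<and> cmod (snd (c t)) \<le> cmod (snd (c 0))"
proof -
  have D: "(c has_vector_derivative F s (c s)) (at s within {0..t})" if "s \<in> {0..t}" for s
    using assms(3) that by (simp add: trajectory_on_def)
  have nz: "fst (c s) \<noteq> 0 \<and> snd (c s) \<noteq> 0" if "s \<in> {0..t}" for s
    using assms(4)[OF that] by (simp add: U_nz_def)
  have signs: "Re (fst (F s (c s)) / fst (c s)) \<le> 0 \<and> Re (snd (F s (c s)) / snd (c s)) \<le> 0"
    if "s \<in> {0..t}" for s
    using log_coordinates_lifting_field(1,2)[OF assms(4)[OF that], of s] that \<open>t \<le> 1\<close> by simp
  have "t \<in> {0..t}" using \<open>0 \<le> t\<close> by simp
  have "cmod (fst (c t)) \<le> cmod (fst (c 0))"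
    by (rule cmod_nonincreasing_if_Re_log_deriv_nonpos[where x="\<lambda>s. fst (c s)"
        and x'="\<lambda>s. fst (F s (c s))", OF bounded_linear.has_vector_derivative[OF bounded_linear_fst D]
        _ _ \<open>t \<in> {0..t}\<close>]) (use nz signs in blast)+
  moreover have "cmod (snd (c t)) \<le> cmod (snd (c 0))"
    by (rule cmod_nonincreasing_if_Re_log_deriv_nonpos[where x="\<lambda>s. snd (c s)"
        and x'="\<lambda>s. snd (F s (c s))", OF bounded_linear.has_vector_derivative[OF bounded_linear_snd D]
        _ _ \<open>t \<in> {0..t}\<close>]) (use nz signs in blast)+
  ultimately show ?thesis ..
qed

lemma trajectory_local_lipschitz_window:
  assumes "trajectory_on T c" "0 \<le> \<tau>" "\<tau> < T" "T \<le> 1" "open V" "c \<tau> \<in> V" "c \<tau> \<in> W"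
  obtains L e \<eta> where "\<And>t. t \<in> {0..1} \<Longrightarrow> L-lipschitz_on (cball (c \<tau>) e) (F t)" "0 \<le> L"
    "0 < \<eta>" "\<tau> + \<eta> \<le> T" "\<eta> * L < 1" "\<And>s. s \<in> {\<tau>..\<tau> + \<eta>} \<Longrightarrow> c s \<in> ball (c \<tau>) e \<inter> V"
proof -
  obtain e where "0 < e" "cball (c \<tau>) e \<subseteq> W"
    using open_contains_cball[THEN iffD1, OF open_W, rule_format, OF \<open>c \<tau> \<in> W\<close>] by blast
  then obtain L where L0: "\<And>S t. convex S \<Longrightarrow> S \<subseteq> cball (c \<tau>) e \<Longrightarrow> t \<in> {0..1} \<Longrightarrow> L-lipschitz_on S (F t)"
    using lifting_field_lipschitz[OF compact_cball] by blast
  note L = L0[OF convex_cball order_refl]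
  have "0 \<le> L" using L[of 0] by (simp add: lipschitz_on_nonneg)
  have "continuous_on {0..T} c" using assms(1) by (rule continuous_on_trajectory)
  moreover have "c \<tau> \<in> ball (c \<tau>) e \<inter> V" using \<open>0 < e\<close> \<open>c \<tau> \<in> V\<close> by simp
  moreover have "0 < 1 / (L + 1)" using \<open>0 \<le> L\<close> by simp
  ultimately obtain \<eta> where \<eta>: "0 < \<eta>" "\<eta> \<le> 1 / (L + 1)" "\<tau> + \<eta> \<le> T"
    "\<And>s. s \<in> {\<tau>..\<tau> + \<eta>} \<Longrightarrow> c s \<in> ball (c \<tau>) e \<inter> V"
    using continuous_on_Icc_stays_in_open[OF _ \<open>0 \<le> \<tau>\<close> \<open>\<tau> < T\<close> open_Int[OF open_ball \<open>open V\<close>]] by blast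
  have "\<eta> * L \<le> L / (L + 1)" using \<eta>(2) \<open>0 \<le> L\<close> mult_right_mono by fastforce
  also have "\<dots> < 1" using \<open>0 \<le> L\<close> by simp
  finally show ?thesis using that[OF L \<open>0 \<le> L\<close> \<eta>(1,3) _ \<eta>(4)] by blast
qed

lemma trajectory_on_subinterval:
  assumes "trajectory_on T c" "0 \<le> \<tau>" "\<tau> + \<eta> \<le> T" "T \<le> 1" "0 < \<eta>"
    and "\<And>t. t \<in> {0..1} \<Longrightarrow> L-lipschitz_on B (F t)"
  shows "\<And>s. s \<in> {\<tau>..\<tau> + \<eta>} \<Longrightarrow> (c has_vector_derivative F s (c s)) (at s within {\<tau>..\<tau> + \<eta>})"
    and "\<And>s. s \<in> {\<tau>..\<tau> + \<eta>} \<Longrightarrow> L-lipschitz_on B (F s)"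
proof -
  fix s assume s: "s \<in> {\<tau>..\<tau> + \<eta>}"
  hence "s \<in> {0..T}" "{\<tau>..\<tau> + \<eta>} \<subseteq> {0..T}" using assms(2,3) by auto
  hence "(c has_vector_derivative F s (c s)) (at s within {0..T})"
    using assms(1) by (simp add: trajectory_on_def)
  thus "(c has_vector_derivative F s (c s)) (at s within {\<tau>..\<tau> + \<eta>})"
    using \<open>{\<tau>..\<tau> + \<eta>} \<subseteq> {0..T}\<close> by (rule has_vector_derivative_within_subset)
  show "L-lipschitz_on B (F s)" using assms(4,6) \<open>s \<in> {0..T}\<close> by simp
qed

text \<open>Tangency of the fields along \<open>|x| = 1\<close> alone does not keep a trajectory there; comparing
  \<open>c s\<close> with the points \<open>(x(\<tau>), y(s))\<close> of the circle does, via \<open>trajectory_stays_in_slice\<close>.\<close>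
lemma trajectory_keeps_fst_on_circle:
  assumes "trajectory_on T c" "0 \<le> \<tau>" "\<tau> < T" "T \<le> 1"
    and "c \<tau> \<in> U" "cmod (fst (c \<tau>)) = 1" "snd (c \<tau>) \<noteq> 0"
  obtains \<eta> where "0 < \<eta>" "\<tau> + \<eta> \<le> T" "\<And>s. s \<in> {\<tau>..\<tau> + \<eta>} \<Longrightarrow> c s \<in> U_nz \<and> fst (c s) = fst (c \<tau>)"
proof -
  define V where "V = {q :: complex \<times> complex. snd q \<noteq> 0 \<and> cmod (snd q) < 1 \<and> cmod (snd q) powr (1 / l2) < h}"
  have "open V" unfolding V_def using l2
    by (intro open_Collect_conj open_Collect_neq open_Collect_less continuous_intros continuous_on_powr') auto
  have "aH (c \<tau>) < h" using assms(5) by (simp add: Us_def)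
  have aH_eq: "aH (c \<tau>) = cmod (snd (c \<tau>)) powr (1 / l2)" using assms(6) by (simp add: absH_def)
  have "aH (c \<tau>) < 1" using \<open>aH (c \<tau>) < h\<close> h_lt_1 by simp
  hence "cmod (snd (c \<tau>)) < 1" using assms(6) by (rule cmod_lt_1_if_other_on_circle(1))
  hence "c \<tau> \<in> V" using assms(7) \<open>aH (c \<tau>) < h\<close> unfolding V_def aH_eq by blast
  obtain L e \<eta> where L: "\<And>t. t \<in> {0..1} \<Longrightarrow> L-lipschitz_on (cball (c \<tau>) e) (F t)" "0 \<le> L"
    and \<eta>: "0 < \<eta>" "\<tau> + \<eta> \<le> T" "\<eta> * L < 1" and near: "\<And>s. s \<in> {\<tau>..\<tau> + \<eta>} \<Longrightarrow> c s \<in> ball (c \<tau>) e \<inter> V"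
    by (rule trajectory_local_lipschitz_window[OF assms(1-4) \<open>open V\<close> \<open>c \<tau> \<in> V\<close> subsetD[OF U_subset_W assms(5)]]) (rule that)
  define q where "q s = (fst (c \<tau>), snd (c s))" for s
  have q: "q s \<in> U \<and> q s \<in> cball (c \<tau>) e" if "s \<in> {\<tau>..\<tau> + \<eta>}" for s
  proof -
    have "c s \<in> V" "dist (c \<tau>) (c s) < e" using near[OF that] by auto
    moreover have "c \<tau> - q s = (0, snd (c \<tau>) - snd (c s))" by (simp add: q_def prod_eq_iff)
    hence "dist (c \<tau>) (q s) = dist (snd (c \<tau>)) (snd (c s))" by (simp add: dist_norm norm_Pair)
    hence "dist (c \<tau>) (q s) \<le> dist (c \<tau>) (c s)" using dist_snd_le by simp
    ultimately show ?thesis using assms(6) by (auto simp: q_def V_def Us_def bidisc_def absH_def)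
  qed
  have slice: "c r \<in> cball (c \<tau>) e \<and> q r \<in> cball (c \<tau>) e \<and> norm (c r - q r) \<le> norm (fst (c r) - fst (c \<tau>))"
    if r: "r \<in> {\<tau>..\<tau> + \<eta>}" for r
  proof -
    have "c r - q r = (fst (c r) - fst (c \<tau>), 0)" by (simp add: q_def prod_eq_iff)
    thus ?thesis using near[OF r] q[OF r] by (simp add: norm_Pair)
  qed
  have tangent: "fst (F r (q r)) = 0" if r: "r \<in> {\<tau>..\<tau> + \<eta>}" for r
  proof -
    have "fst (v1 (q r)) = 0 \<and> fst (vI (q r)) = 0"
      using q[OF r] assms(6) by (intro fields_tangent_x) (auto simp: q_def)
    thus ?thesis by (simp add: lifting_field_eq)
  qed
  have "norm (fst x) \<le> norm x" for x :: "complex \<times> complex" using norm_fst_le[of "fst x" "snd x"] by simp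
  moreover have "(\<tau> + \<eta> - \<tau>) * L < 1" using \<eta>(3) by simp
  ultimately have fst_eq: "fst (c s) = fst (c \<tau>)" if "s \<in> {\<tau>..\<tau> + \<eta>}" for s
    using trajectory_stays_in_slice[OF bounded_linear_fst _ L(2) _
        trajectory_on_subinterval[OF assms(1,2) \<eta>(2) assms(4) \<eta>(1) L(1)] slice tangent that]
    by blast
  have "c s = q s" if "s \<in> {\<tau>..\<tau> + \<eta>}" for s using fst_eq[OF that] by (simp add: q_def prod_eq_iff)
  moreover have "snd (c s) \<noteq> 0" if "s \<in> {\<tau>..\<tau> + \<eta>}" for s using near[OF that] by (simp add: V_def)
  moreover have "fst (c \<tau>) \<noteq> 0" using assms(6) by auto
  ultimately have "c s \<in> U_nz \<and> fst (c s) = fst (c \<tau>)" if "s \<in> {\<tau>..\<tau> + \<eta>}" for s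
    using q[OF that] fst_eq[OF that] that unfolding U_nz_def by (simp add: q_def)
  thus ?thesis by (rule that[OF \<eta>(1,2)])
qed

lemma trajectory_keeps_snd_on_circle:
  assumes "trajectory_on T c" "0 \<le> \<tau>" "\<tau> < T" "T \<le> 1"
    and "c \<tau> \<in> U" "cmod (snd (c \<tau>)) = 1" "fst (c \<tau>) \<noteq> 0"
  obtains \<eta> where "0 < \<eta>" "\<tau> + \<eta> \<le> T" "\<And>s. s \<in> {\<tau>..\<tau> + \<eta>} \<Longrightarrow> c s \<in> U_nz \<and> snd (c s) = snd (c \<tau>)"
proof -
  define V where "V = {q :: complex \<times> complex. fst q \<noteq> 0 \<and> cmod (fst q) < 1 \<and> cmod (fst q) powr (1 / l1) < h}"
  have "open V" unfolding V_def using l1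
    by (intro open_Collect_conj open_Collect_neq open_Collect_less continuous_intros continuous_on_powr') auto
  have "aH (c \<tau>) < h" using assms(5) by (simp add: Us_def)
  have aH_eq: "aH (c \<tau>) = cmod (fst (c \<tau>)) powr (1 / l1)" using assms(6) by (simp add: absH_def)
  have "aH (c \<tau>) < 1" using \<open>aH (c \<tau>) < h\<close> h_lt_1 by simp
  hence "cmod (fst (c \<tau>)) < 1" using assms(6) by (rule cmod_lt_1_if_other_on_circle(2))
  hence "c \<tau> \<in> V" using assms(7) \<open>aH (c \<tau>) < h\<close> unfolding V_def aH_eq by blast
  obtain L e \<eta> where L: "\<And>t. t \<in> {0..1} \<Longrightarrow> L-lipschitz_on (cball (c \<tau>) e) (F t)" "0 \<le> L"
    and \<eta>: "0 < \<eta>" "\<tau> + \<eta> \<le> T" "\<eta> * L < 1" and near: "\<And>s. s \<in> {\<tau>..\<tau> + \<eta>} \<Longrightarrow> c s \<in> ball (c \<tau>) e \<inter> V"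
    by (rule trajectory_local_lipschitz_window[OF assms(1-4) \<open>open V\<close> \<open>c \<tau> \<in> V\<close> subsetD[OF U_subset_W assms(5)]]) (rule that)
  define q where "q s = (fst (c s), snd (c \<tau>))" for s
  have q: "q s \<in> U \<and> q s \<in> cball (c \<tau>) e" if "s \<in> {\<tau>..\<tau> + \<eta>}" for s
  proof -
    have "c s \<in> V" "dist (c \<tau>) (c s) < e" using near[OF that] by auto
    moreover have "c \<tau> - q s = (fst (c \<tau>) - fst (c s), 0)" by (simp add: q_def prod_eq_iff)
    hence "dist (c \<tau>) (q s) = dist (fst (c \<tau>)) (fst (c s))" by (simp add: dist_norm norm_Pair)
    hence "dist (c \<tau>) (q s) \<le> dist (c \<tau>) (c s)" using dist_fst_le by simp
    ultimately show ?thesis using assms(6) by (auto simp: q_def V_def Us_def bidisc_def absH_def)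
  qed
  have slice: "c r \<in> cball (c \<tau>) e \<and> q r \<in> cball (c \<tau>) e \<and> norm (c r - q r) \<le> norm (snd (c r) - snd (c \<tau>))"
    if r: "r \<in> {\<tau>..\<tau> + \<eta>}" for r
  proof -
    have "c r - q r = (0, snd (c r) - snd (c \<tau>))" by (simp add: q_def prod_eq_iff)
    thus ?thesis using near[OF r] q[OF r] by (simp add: norm_Pair)
  qed
  have tangent: "snd (F r (q r)) = 0" if r: "r \<in> {\<tau>..\<tau> + \<eta>}" for r
  proof -
    have "snd (v1 (q r)) = 0 \<and> snd (vI (q r)) = 0"
      using q[OF r] assms(6) by (intro fields_tangent_y) (auto simp: q_def)
    thus ?thesis by (simp add: lifting_field_eq)
  qed
  have "norm (snd x) \<le> norm x" for x :: "complex \<times> complex" using norm_snd_le[of "snd x" "fst x"] by simp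
  moreover have "(\<tau> + \<eta> - \<tau>) * L < 1" using \<eta>(3) by simp
  ultimately have snd_eq: "snd (c s) = snd (c \<tau>)" if "s \<in> {\<tau>..\<tau> + \<eta>}" for s
    using trajectory_stays_in_slice[OF bounded_linear_snd _ L(2) _
        trajectory_on_subinterval[OF assms(1,2) \<eta>(2) assms(4) \<eta>(1) L(1)] slice tangent that]
    by blast
  have "c s = q s" if "s \<in> {\<tau>..\<tau> + \<eta>}" for s using snd_eq[OF that] by (simp add: q_def prod_eq_iff)
  moreover have "fst (c s) \<noteq> 0" if "s \<in> {\<tau>..\<tau> + \<eta>}" for s using near[OF that] by (simp add: V_def)
  moreover have "snd (c \<tau>) \<noteq> 0" using assms(6) by auto
  ultimately have "c s \<in> U_nz \<and> snd (c s) = snd (c \<tau>)" if "s \<in> {\<tau>..\<tau> + \<eta>}" for s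
    using q[OF that] snd_eq[OF that] that unfolding U_nz_def by (simp add: q_def)
  thus ?thesis by (rule that[OF \<eta>(1,2)])
qed

definition confined :: "complex \<times> complex \<Rightarrow> (complex \<times> complex) set" where
  "confined a = {p \<in> frozen a. aH p \<in> (\<lambda>t. cmod (\<rho> t)) ` {0..1} \<and>
     cmod (fst p) \<le> cmod (fst a) \<and> cmod (snd p) \<le> cmod (snd a)}"

lemma compact_confined: "compact (confined a)"
proof -
  have "compact ((\<lambda>t. cmod (\<rho> t)) ` {0..1})"
    by (intro compact_continuous_image continuous_intros compact_Icc
        continuous_on_subset[OF Cinf_on_continuous_on[OF smooth_\<rho>] interval_W\<rho>])
  hence "closed (aH -` ((\<lambda>t. cmod (\<rho> t)) ` {0..1}))"
    by (intro closed_vimage compact_imp_closed continuous_on_absH l1 l2)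
  moreover have "closed {p :: complex \<times> complex. cmod (fst p) \<le> cmod (fst a)}"
    "closed {p :: complex \<times> complex. cmod (snd p) \<le> cmod (snd a)}"
    by (intro closed_Collect_le continuous_intros)+
  ultimately have "closed (confined a)"
    unfolding confined_def Collect_conj_eq using closed_frozen
    by (simp add: vimage_def closed_Int Int_assoc)
  moreover have "confined a \<subseteq> cball 0 (cmod (fst a) + cmod (snd a))"
    using norm_Pair_le by (fastforce simp: confined_def intro: order_trans)
  ultimately show ?thesis by (metis bounded_cball bounded_subset compact_eq_bounded_closed)
qed

lemma confined_subset_U_nz:
  assumes "a \<in> bidisc"
  shows "confined a \<subseteq> U_nz"
proof
  fix p assume p: "p \<in> confined a"
  then obtain t where "t \<in> {0..1}" "aH p = cmod (\<rho> t)" by (auto simp: confined_def)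
  moreover have "\<rho> t \<noteq> 0" "cmod (\<rho> t) \<le> h0" using \<rho>_bounds \<open>t \<in> {0..1}\<close> by auto
  ultimately have "0 < aH p" "aH p < h" using h0 by auto
  moreover have "p \<in> bidisc" using p assms by (auto simp: confined_def bidisc_def)
  ultimately show "p \<in> U_nz" by (auto simp: U_nz_def Us_def absH_pos_iff)
qed

lemma start_confined: "aH a = h0 \<Longrightarrow> a \<in> confined a"
  using h0 \<rho>_0 by (force simp: confined_def frozen_def)

lemma confined_if_admissible:
  assumes "aH a = h0" "0 \<le> t" "t \<le> 1" "trajectory_on t c" "c 0 = a"
    and admissible: "\<And>s. s \<in> {0..t} \<Longrightarrow> c s \<in> U_nz \<inter> frozen a"
  shows "c t \<in> confined a"
proof -
  have "t \<in> {0..t}" "t \<in> {0..1}" using assms(2,3) by auto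
  have "ln (aH (c t)) - ln (cmod (\<rho> t)) = ln (aH a) - ln (cmod (\<rho> 0))"
    using trajectory_conserves_absH_over_cmod_\<rho>[OF assms(2-4)] admissible assms(5) by blast
  hence "ln (aH (c t)) = ln (cmod (\<rho> t))" using assms(1) \<rho>_0 h0 by simp
  moreover have "0 < aH (c t)" using admissible[OF \<open>t \<in> {0..t}\<close>] by (simp add: U_nz_def absH_pos_iff)
  moreover have "0 < cmod (\<rho> t)" using \<rho>_bounds \<open>t \<in> {0..1}\<close> by simp
  ultimately have "aH (c t) = cmod (\<rho> t)" by simp
  moreover have "cmod (fst (c t)) \<le> cmod (fst a) \<and> cmod (snd (c t)) \<le> cmod (snd a)"
    using trajectory_cmod_nonincreasing[OF assms(2-4)] admissible assms(5) by blast
  ultimately show ?thesis using admissible[OF \<open>t \<in> {0..t}\<close>] \<open>t \<in> {0..1}\<close> by (auto simp: confined_def)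
qed

lemma trajectory_locally_admissible:
  assumes "a \<in> bidisc" "T \<le> 1" "trajectory_on T c" "0 \<le> \<tau>" "\<tau> < T" "c \<tau> \<in> confined a"
  obtains \<eta> where "0 < \<eta>" "\<tau> + \<eta> \<le> T" "\<And>s. s \<in> {\<tau>..\<tau> + \<eta>} \<Longrightarrow> c s \<in> U_nz \<inter> frozen a"
proof -
  have "c \<tau> \<in> U_nz" using confined_subset_U_nz[OF assms(1)] assms(6) by blast
  hence "c \<tau> \<in> U" "fst (c \<tau>) \<noteq> 0" "snd (c \<tau>) \<noteq> 0" by (simp_all add: U_nz_def)
  have "aH (c \<tau>) < 1" using \<open>c \<tau> \<in> U\<close> h_lt_1 by (simp add: Us_def)
  have a: "cmod (fst a) \<le> 1" "cmod (snd a) \<le> 1" using assms(1) by (simp_all add: bidisc_def)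
  have le: "cmod (fst (c \<tau>)) \<le> cmod (fst a)" "cmod (snd (c \<tau>)) \<le> cmod (snd a)"
    and fr: "c \<tau> \<in> frozen a" using assms(6) by (simp_all add: confined_def)
  consider "cmod (fst (c \<tau>)) = 1" | "cmod (snd (c \<tau>)) = 1" | "cmod (fst (c \<tau>)) < 1" "cmod (snd (c \<tau>)) < 1"
    using le a by linarith
  thus ?thesis
  proof cases
    case 1
    hence a1: "cmod (fst a) = 1" "fst (c \<tau>) = fst a" using le a fr by (simp_all add: frozen_def)
    have "cmod (snd (c \<tau>)) < 1"
      using cmod_lt_1_if_other_on_circle(1)[OF \<open>aH (c \<tau>) < 1\<close> 1] .
    hence a2: "cmod (snd a) \<noteq> 1" using fr by (auto simp: frozen_def)
    obtain \<eta> where \<eta>: "0 < \<eta>" "\<tau> + \<eta> \<le> T"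
      and ext: "\<And>s. s \<in> {\<tau>..\<tau> + \<eta>} \<Longrightarrow> c s \<in> U_nz \<and> fst (c s) = fst (c \<tau>)"
      by (rule trajectory_keeps_fst_on_circle[OF assms(3,4,5,2) \<open>c \<tau> \<in> U\<close> 1 \<open>snd (c \<tau>) \<noteq> 0\<close>]) (rule that)
    have "c s \<in> U_nz \<inter> frozen a" if "s \<in> {\<tau>..\<tau> + \<eta>}" for s
      using ext[OF that] a1 a2 by (simp add: frozen_def)
    thus ?thesis by (rule that[OF \<eta>])
  next
    case 2
    hence a1: "cmod (snd a) = 1" "snd (c \<tau>) = snd a" using le a fr by (simp_all add: frozen_def)
    have "cmod (fst (c \<tau>)) < 1"
      using cmod_lt_1_if_other_on_circle(2)[OF \<open>aH (c \<tau>) < 1\<close> 2] .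
    hence a2: "cmod (fst a) \<noteq> 1" using fr by (auto simp: frozen_def)
    obtain \<eta> where \<eta>: "0 < \<eta>" "\<tau> + \<eta> \<le> T"
      and ext: "\<And>s. s \<in> {\<tau>..\<tau> + \<eta>} \<Longrightarrow> c s \<in> U_nz \<and> snd (c s) = snd (c \<tau>)"
      by (rule trajectory_keeps_snd_on_circle[OF assms(3,4,5,2) \<open>c \<tau> \<in> U\<close> 2 \<open>fst (c \<tau>) \<noteq> 0\<close>]) (rule that)
    have "c s \<in> U_nz \<inter> frozen a" if "s \<in> {\<tau>..\<tau> + \<eta>}" for s
      using ext[OF that] a1 a2 by (simp add: frozen_def)
    thus ?thesis by (rule that[OF \<eta>])
  next
    case 3
    hence "frozen a = UNIV" using fr by (auto simp: frozen_def)
    have "c \<tau> \<in> U_core"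
      using 3 \<open>c \<tau> \<in> U\<close> \<open>fst (c \<tau>) \<noteq> 0\<close> \<open>snd (c \<tau>) \<noteq> 0\<close> by (simp add: U_core_def Us_def)
    then obtain \<eta> where \<eta>: "0 < \<eta>" "\<tau> + \<eta> \<le> T" and core: "\<And>s. s \<in> {\<tau>..\<tau> + \<eta>} \<Longrightarrow> c s \<in> U_core"
      using continuous_on_Icc_stays_in_open[OF continuous_on_trajectory[OF assms(3)] assms(4,5) open_U_core _ zero_less_one]
      by blast
    have "U_core \<subseteq> U_nz" by (auto simp: U_core_def U_nz_def Us_def bidisc_def)
    hence "c s \<in> U_nz \<inter> frozen a" if "s \<in> {\<tau>..\<tau> + \<eta>}" for s
      using core[OF that] \<open>frozen a = UNIV\<close> by blast
    thus ?thesis by (rule that[OF \<eta>])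
  qed
qed

lemma trajectory_confined:
  assumes "a \<in> bidisc" "aH a = h0" "T \<le> 1" "trajectory_on T c" "c 0 = a" "t \<in> {0..T}"
  shows "c t \<in> confined a"
proof (rule continuous_induction_Icc[OF continuous_on_trajectory[OF assms(4)]
      compact_imp_closed[OF compact_confined] _ _ assms(6)])
  show "c 0 \<in> confined a" using start_confined[OF assms(2)] assms(5) by simp
  fix \<tau> assume "0 \<le> \<tau>" "\<tau> < T" and upto: "\<And>s. s \<in> {0..\<tau>} \<Longrightarrow> c s \<in> confined a"
  have "c \<tau> \<in> confined a" using upto \<open>0 \<le> \<tau>\<close> by simp
  then obtain \<eta> where "0 < \<eta>" "\<tau> + \<eta> \<le> T" and ext: "\<And>s. s \<in> {\<tau>..\<tau> + \<eta>} \<Longrightarrow> c s \<in> U_nz \<inter> frozen a"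
    by (rule trajectory_locally_admissible[OF assms(1,3,4) \<open>0 \<le> \<tau>\<close> \<open>\<tau> < T\<close>]) (rule that)
  have admissible: "c s \<in> U_nz \<inter> frozen a" if "s \<in> {0..\<tau> + \<eta>}" for s
  proof (cases "s \<le> \<tau>")
    case True
    hence "c s \<in> confined a" using upto that by simp
    thus ?thesis using confined_subset_U_nz[OF assms(1)] by (auto simp: confined_def)
  qed (use ext that in simp)
  have "c s \<in> confined a" if "s \<in> {0..\<tau> + \<eta>}" for s
    using assms(2,5) admissible trajectory_on_restrict[OF assms(4), of s] that \<open>\<tau> + \<eta> \<le> T\<close> assms(3)
    by (intro confined_if_admissible) auto
  thus "\<exists>\<eta>>0. \<tau> + \<eta> \<le> T \<and> (\<forall>s\<in>{0..\<tau> + \<eta>}. c s \<in> confined a)"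
    using \<open>0 < \<eta>\<close> \<open>\<tau> + \<eta> \<le> T\<close> by blast
qed

lemma lifting_field_uniform_local_existence:
  assumes "compact K" "K \<subseteq> W"
  obtains \<delta> where "0 < \<delta>" "\<And>p T. p \<in> K \<Longrightarrow> 0 \<le> T \<Longrightarrow> T < 1 \<Longrightarrow> \<exists>d. d T = p \<and>
      (\<forall>t\<in>{T..min 1 (T + \<delta>)}. (d has_vector_derivative F t (d t)) (at t within {T..min 1 (T + \<delta>)}))"
proof -
  obtain e where "0 < e" and "(\<Union>p\<in>K. cball p e) \<subseteq> W"
    using compact_subset_open_imp_cball_epsilon_subset[OF assms(1) open_W assms(2)] by blast
  define C where "C = (\<Union>p\<in>K. cball p e)"
  have "compact C" unfolding C_def by (rule compact_minkowski_sum_cball[OF assms(1)])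
  have "C \<subseteq> W" by (simp add: C_def \<open>(\<Union>p\<in>K. cball p e) \<subseteq> W\<close>)
  obtain M where "0 \<le> M" and M: "\<And>t p. t \<in> {0..1} \<Longrightarrow> p \<in> C \<Longrightarrow> norm (F t p) \<le> M"
    using lifting_field_bounded[OF \<open>compact C\<close> \<open>C \<subseteq> W\<close>] by blast
  obtain L where L: "\<And>S t. convex S \<Longrightarrow> S \<subseteq> C \<Longrightarrow> t \<in> {0..1} \<Longrightarrow> L-lipschitz_on S (F t)"
    using lifting_field_lipschitz[OF \<open>compact C\<close> \<open>C \<subseteq> W\<close>] by blast
  have "0 \<le> L" using L[of "{}" 0] by simp
  define \<delta> where "\<delta> = min (e / (M + 1)) (1 / (L + 1))"
  have "0 < \<delta>" using \<open>0 < e\<close> \<open>0 \<le> M\<close> \<open>0 \<le> L\<close> by (simp add: \<delta>_def)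
  have "\<delta> * M \<le> e / (M + 1) * M" using \<open>0 \<le> M\<close> by (intro mult_right_mono) (auto simp: \<delta>_def)
  also have "\<dots> \<le> e" using \<open>0 < e\<close> \<open>0 \<le> M\<close> by (simp add: field_simps)
  finally have "\<delta> * M \<le> e" .
  have "\<delta> * L \<le> 1 / (L + 1) * L" using \<open>0 \<le> L\<close> by (intro mult_right_mono) (auto simp: \<delta>_def)
  also have "\<dots> < 1" using \<open>0 \<le> L\<close> by (simp add: field_simps)
  finally have "\<delta> * L < 1" .
  have "\<exists>d. d T = p \<and> (\<forall>t\<in>{T..min 1 (T + \<delta>)}.
      (d has_vector_derivative F t (d t)) (at t within {T..min 1 (T + \<delta>)}))"
    if "p \<in> K" "0 \<le> T" "T < 1" for p T
  proof -
    define T' where "T' = min 1 (T + \<delta>)"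
    have "T < T'" "{T..T'} \<subseteq> {0..1}" "T' - T \<le> \<delta>" using that \<open>0 < \<delta>\<close> by (auto simp: T'_def)
    have "cball p e \<subseteq> C" using that(1) by (auto simp: C_def)
    have "(T' - T) * M \<le> e" using \<open>T' - T \<le> \<delta>\<close> \<open>0 \<le> M\<close> \<open>\<delta> * M \<le> e\<close> mult_right_mono by fastforce
    moreover have "(T' - T) * L < 1" using \<open>T' - T \<le> \<delta>\<close> \<open>0 \<le> L\<close> \<open>\<delta> * L < 1\<close> mult_right_mono by fastforce
    moreover have "continuous_on {T..T'} (\<lambda>s. F s (u s))"
      if "continuous_on {T..T'} u" "u ` {T..T'} \<subseteq> cball p e" for u
      using that \<open>{T..T'} \<subseteq> {0..1}\<close> \<open>cball p e \<subseteq> C\<close> \<open>C \<subseteq> W\<close>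
      by (intro continuous_on_lifting_field_along) auto
    moreover have "norm (F t q) \<le> M" if "t \<in> {T..T'}" "q \<in> cball p e" for t q
      using M that \<open>{T..T'} \<subseteq> {0..1}\<close> \<open>cball p e \<subseteq> C\<close> by blast
    moreover have "L-lipschitz_on (cball p e) (F t)" if "t \<in> {T..T'}" for t
      using L[OF convex_cball \<open>cball p e \<subseteq> C\<close>] that \<open>{T..T'} \<subseteq> {0..1}\<close> by blast
    ultimately obtain d where "d T = p"
      "\<And>t. t \<in> {T..T'} \<Longrightarrow> d t \<in> cball p e \<and> (d has_vector_derivative F t (d t)) (at t within {T..T'})"
      using ode_local_existence[OF \<open>T < T'\<close> \<open>0 < e\<close> \<open>0 \<le> M\<close>] by blast
    thus ?thesis unfolding T'_def[symmetric] by blast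
  qed
  thus ?thesis using that[OF \<open>0 < \<delta>\<close>] by blast
qed

lemma trajectory_exists:
  assumes "a \<in> bidisc" "aH a = h0"
  obtains c where "c 0 = a" "trajectory_on 1 c"
proof -
  have "confined a \<subseteq> W" using confined_subset_U_nz[OF assms(1)] U_subset_W by (auto simp: U_nz_def)
  then obtain \<delta> where "0 < \<delta>" and step: "\<And>p T. p \<in> confined a \<Longrightarrow> 0 \<le> T \<Longrightarrow> T < 1 \<Longrightarrow> \<exists>d. d T = p \<and>
      (\<forall>t\<in>{T..min 1 (T + \<delta>)}. (d has_vector_derivative F t (d t)) (at t within {T..min 1 (T + \<delta>)}))"
    using lifting_field_uniform_local_existence[OF compact_confined] by blast
  have "\<exists>c. c 0 = a \<and> trajectory_on (min 1 (real n * \<delta>)) c" for n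
  proof (induction n)
    case 0
    have "((\<lambda>_. a) has_vector_derivative F 0 a) (at 0 within {0..0})"
      by (rule has_vector_derivative_within_not_islimpt) (simp add: islimpt_finite)
    thus ?case by (auto simp: trajectory_on_def)
  next
    case (Suc n)
    then obtain c where "c 0 = a" and c: "trajectory_on (min 1 (real n * \<delta>)) c" by blast
    define T where "T = min 1 (real n * \<delta>)"
    show ?case
    proof (cases "T = 1")
      case True
      hence "1 \<le> real n * \<delta>" by (auto simp: T_def min_def split: if_splits)
      hence "min 1 (real (Suc n) * \<delta>) = 1" using \<open>0 < \<delta>\<close> by (simp add: algebra_simps)
      thus ?thesis using c True \<open>c 0 = a\<close> by (auto simp: T_def)
    next
      case False
      hence "T < 1" "T = real n * \<delta>" "0 \<le> T" using \<open>0 < \<delta>\<close> by (auto simp: T_def min_def)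
      have "c T \<in> confined a"
        using trajectory_confined[OF assms \<open>T < 1\<close>[THEN less_imp_le] c[folded T_def] \<open>c 0 = a\<close>] \<open>0 \<le> T\<close>
        by simp
      then obtain d where "d T = c T" and d: "\<forall>t\<in>{T..min 1 (T + \<delta>)}.
          (d has_vector_derivative F t (d t)) (at t within {T..min 1 (T + \<delta>)})"
        using step \<open>0 \<le> T\<close> \<open>T < 1\<close> by metis
      define z where "z = (\<lambda>t. if t \<le> T then c t else d t)"
      have "min 1 (real (Suc n) * \<delta>) = min 1 (T + \<delta>)" using \<open>T = real n * \<delta>\<close> by (simp add: algebra_simps)
      moreover have "T \<le> min 1 (T + \<delta>)" using \<open>T < 1\<close> \<open>0 < \<delta>\<close> by simp
      ultimately have "trajectory_on (min 1 (real (Suc n) * \<delta>)) z"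
        unfolding z_def using c[folded T_def] \<open>0 \<le> T\<close> \<open>d T = c T\<close> d
        by (intro trajectory_on_extend) auto
      moreover have "z 0 = a" using \<open>0 \<le> T\<close> \<open>c 0 = a\<close> by (simp add: z_def)
      ultimately show ?thesis by blast
    qed
  qed
  moreover obtain n :: nat where "1 / \<delta> < real n" using reals_Archimedean2 by blast
  hence "min 1 (real n * \<delta>) = 1" using \<open>0 < \<delta>\<close> by (simp add: field_simps)
  ultimately show ?thesis using that by metis
qed

lemma lifting_confined:
  assumes "a \<in> bidisc" "aH a = h0" "is_lifting \<rho> v1 vI W a c" "t \<in> {0..1}"
  shows "c t \<in> confined a"
  using assms trajectory_confined[of a 1 c t] by (simp add: is_lifting_def trajectory_on_def)

lemma lifting_exists:
  assumes "a \<in> bidisc" "aH a = h0"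
  shows "\<exists>c. is_lifting \<rho> v1 vI W a c"
proof -
  obtain c where "c 0 = a" "trajectory_on 1 c" using trajectory_exists[OF assms] by blast
  moreover have "c t \<in> W" if "t \<in> {0..1}" for t
    using trajectory_confined[OF assms order_refl \<open>trajectory_on 1 c\<close> \<open>c 0 = a\<close> that]
      confined_subset_U_nz[OF assms(1)] U_subset_W by (auto simp: U_nz_def)
  ultimately show ?thesis by (auto simp: is_lifting_def trajectory_on_def)
qed

end

theorem proposition1:
  fixes l1 l2 h h0 :: real
    and v1 vI :: "complex \<times> complex \<Rightarrow> complex \<times> complex"
    and W :: "(complex \<times> complex) set"
    and g :: "real \<Rightarrow> complex \<times> complex"
    and \<rho> :: "real \<Rightarrow> complex"
    and W\<rho> :: "real set"
  assumes "l1 > 0" and "l2 > 0" and "0 < h" and "h < 1"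
    and "open W" and "Us l1 l2 h \<subseteq> W" and "Cinf_on W v1" and "Cinf_on W vI"
    and "\<forall>p\<in>Us l1 l2 h. fst p \<noteq> 0 \<and> snd p \<noteq> 0 \<longrightarrow>
           dlogH l1 l2 p (v1 p) = 1 \<and> dlogH l1 l2 p (vI p) = \<i>"
    and "\<forall>c a b. (\<forall>t\<in>{a..b}. c t \<in> Us l1 l2 h \<and>
                   (c has_vector_derivative v1 (c t)) (at t within {a..b})) \<longrightarrow>
           (\<forall>s\<in>{a..b}. \<forall>t\<in>{a..b}. s \<le> t \<longrightarrow>
              cmod (fst (c s)) \<le> cmod (fst (c t)) \<and> cmod (snd (c s)) \<le> cmod (snd (c t)))"
    and "\<forall>c a b. (\<forall>t\<in>{a..b}. c t \<in> Us l1 l2 h \<and>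
                   (c has_vector_derivative vI (c t)) (at t within {a..b})) \<longrightarrow>
           (\<forall>s\<in>{a..b}. \<forall>t\<in>{a..b}. s \<le> t \<longrightarrow>
              cmod (fst (c t)) \<le> cmod (fst (c s)) \<and> cmod (snd (c t)) \<le> cmod (snd (c s)))"
    and "\<exists>\<epsilon>>0. \<forall>p\<in>Us l1 l2 h. cmod (snd p) > 1 - \<epsilon> \<longrightarrow> snd (v1 p) = 0 \<and> snd (vI p) = 0"
    and "\<exists>\<epsilon>>0. \<forall>p\<in>Us l1 l2 h. cmod (fst p) > 1 - \<epsilon> \<longrightarrow> fst (v1 p) = 0 \<and> fst (vI p) = 0"
    and "0 < h0" and "h0 < h"
    and "path g" and "path_image g \<subseteq> bidisc \<inter> H_level l1 l2 (of_real h0)"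
    and "open W\<rho>" and "{0..1} \<subseteq> W\<rho>" and "Cinf_on W\<rho> \<rho>"
    and "\<rho> 0 = of_real h0"
    and "\<forall>t\<in>{0..1}. \<rho> t \<noteq> 0 \<and> cmod (\<rho> t) \<le> h0"
    and "\<forall>t\<in>{0..1}. \<exists>D<0. ((\<lambda>s. cmod (\<rho> s)) has_real_derivative D) (at t)"
  shows "(\<forall>a\<in>path_image g. (\<exists>c. is_lifting \<rho> v1 vI W a c) \<and>
            (\<forall>c. is_lifting \<rho> v1 vI W a c \<longrightarrow> (\<forall>t\<in>{0..1}. c t \<in> Us l1 l2 h)))
       \<and> ((\<exists>a\<in>path_image g. fst a = 1) \<longrightarrow>
            (\<forall>t\<in>{0..1}. \<exists>a\<in>path_image g. \<forall>c. is_lifting \<rho> v1 vI W a c \<longrightarrow> fst (c t) = 1))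
       \<and> ((\<exists>a\<in>path_image g. snd a = 1) \<longrightarrow>
            (\<forall>t\<in>{0..1}. \<exists>a\<in>path_image g. \<forall>c. is_lifting \<rho> v1 vI W a c \<longrightarrow> snd (c t) = 1))"
proof -
  interpret transport l1 l2 h v1 vI W \<rho> W\<rho> h0
    using assms by unfold_locales blast+
  have start: "a \<in> bidisc" "aH a = h0" if "a \<in> path_image g" for a
    using assms(17) that absH_eq_if_H_level[of a l1 l2 h0] h0 by auto
  have frozen: "c t \<in> frozen a" "c t \<in> U"
    if "a \<in> path_image g" "is_lifting \<rho> v1 vI W a c" "t \<in> {0..1}" for a c t
    using lifting_confined[OF start[OF that(1)] that(2,3)] confined_subset_U_nz[OF start(1)[OF that(1)]]
    by (auto simp: confined_def U_nz_def)
  show ?thesis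
  proof (intro conjI ballI impI allI)
    fix a assume "a \<in> path_image g"
    show "\<exists>c. is_lifting \<rho> v1 vI W a c" by (rule lifting_exists[OF start[OF \<open>a \<in> path_image g\<close>]])
    show "c t \<in> U" if "is_lifting \<rho> v1 vI W a c" "t \<in> {0..1}" for c t
      using frozen[OF \<open>a \<in> path_image g\<close> that] by blast
  next
    fix t :: real assume "\<exists>a\<in>path_image g. fst a = 1" "t \<in> {0..1}"
    then obtain a where "a \<in> path_image g" "fst a = 1" by blast
    show "\<exists>a\<in>path_image g. \<forall>c. is_lifting \<rho> v1 vI W a c \<longrightarrow> fst (c t) = 1"
    proof (intro bexI[OF _ \<open>a \<in> path_image g\<close>] allI impI)
      fix c assume "is_lifting \<rho> v1 vI W a c"
      hence "c t \<in> frozen a" using frozen(1) \<open>a \<in> path_image g\<close> \<open>t \<in> {0..1}\<close> by blast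
      thus "fst (c t) = 1" using \<open>fst a = 1\<close> by (simp add: frozen_def)
    qed
  next
    fix t :: real assume "\<exists>a\<in>path_image g. snd a = 1" "t \<in> {0..1}"
    then obtain a where "a \<in> path_image g" "snd a = 1" by blast
    show "\<exists>a\<in>path_image g. \<forall>c. is_lifting \<rho> v1 vI W a c \<longrightarrow> snd (c t) = 1"
    proof (intro bexI[OF _ \<open>a \<in> path_image g\<close>] allI impI)
      fix c assume "is_lifting \<rho> v1 vI W a c"
      hence "c t \<in> frozen a" using frozen(1) \<open>a \<in> path_image g\<close> \<open>t \<in> {0..1}\<close> by blast
      thus "snd (c t) = 1" using \<open>snd a = 1\<close> by (simp add: frozen_def)
    qed
  qed
qed

end
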